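(* Let $\mathcal{D}$ be a small category, let $F\colon \mathcal{D}\to \mathbf{sCat}$ be a functor, and let $f=\mathrm{N}\circ F\colon \mathcal{D}\to\mathbf{sSet}$. Then there is an isomorphism of simplicial sets \[\mathrm{N}(\mathbf{Gr}\,F)\cong \mathrm{N}_f(\mathcal{D})\] compatible with the canonical projections of both sides to $\mathrm{N}(\mathcal{D})$ (the paper states this as an isomorphism of coCartesian fibrations over $\mathrm{N}(\mathcal{D})$).
   Context: $\mathbf{sCat}$ is the category of simplicially enriched categories, $\mathrm{N}\colon\mathbf{sCat}\to\mathbf{sSet}$ is the simplicial (homotopy coherent) nerve, right adjoint to $\mathfrak{C}\colon \mathbf{sSet}\to\mathbf{sCat}$; $\mathrm{N}(\mathcal{D})$ is the ordinary nerve. Relative nerve: for $f\colon\mathcal{D}\to\mathbf{sSet}$, $\mathrm{N}_f(\mathcal{D})$ is the simplicial set whose $n$-simplices consist of (i) a functor $d\colon[n]\to\mathcal{D}$, writing $d_i=d(i)$ and $d_{ij}\colon d_i\to d_j$ for $i\le j$; (ii) for every nonempty $J\subseteq[n]$ with maximal element $j$, a map $s^J\colon\Delta^J\to f(d_j)$; (iii) such that for nonempty $I\subseteq J$ with maxima $i\le j$, $f(d_{ij})\circ s^I = s^J|_{\Delta^I}$. It has a canonical map to $\mathrm{N}(\mathcal{D})$. Grothendieck construction: $\mathbf{Gr}\,F$ is the simplicial category with objects pairs $(x,c)$, $c\in\mathcal{D}$, $x\in\mathrm{Ob}(Fc)$, and hom simplicial sets $\mathbf{Gr}F((x,c),(y,d))=\coprod_{\varphi\colon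 c\to d} Fd(F\varphi\,x,y)\times\{\varphi\}$; composition of $(\sigma,\varphi)\colon(x,c)\to(y,d)$ and $(\tau,\psi)\colon(y,d)\to(z,e)$ is $(\tau\circ F\psi(\sigma),\psi\varphi)$ (extended simplicially). There is a simplicial functor $\mathbf{Gr}F\to\mathcal{D}$, $(x,c)\mapsto c$, with $\mathcal{D}$ viewed as a discrete simplicial category, whose nerve gives the projection $\mathrm{N}(\mathbf{Gr}F)\to\mathrm{N}(\mathcal{D})$. *)

theory Defs
  imports Main
begin

text \<open>A simplicial set is given by its sets of n-simplices together with the action
  of monotone maps alpha : [m] -> [n] (sact X m n alpha : X_n -> X_m).\<close>

record 's sset =
  ssimp :: "nat \<Rightarrow> 's set"
  sact :: "nat \<Rightarrow> nat \<Rightarrow> (nat \<Rightarrow> nat) \<Rightarrow> 's \<Rightarrow> 's"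

definition mono_map :: "nat \<Rightarrow> nat \<Rightarrow> (nat \<Rightarrow> nat) \<Rightarrow> bool" where
  "mono_map m n \<alpha> \<longleftrightarrow> (\<forall>p\<le>m. \<alpha> p \<le> n) \<and> (\<forall>p q. p \<le> q \<longrightarrow> q \<le> m \<longrightarrow> \<alpha> p \<le> \<alpha> q)"

definition is_sset :: "'s sset \<Rightarrow> bool" where
  "is_sset X \<longleftrightarrow>
     (\<forall>m n \<alpha> x. mono_map m n \<alpha> \<longrightarrow> x \<in> ssimp X n \<longrightarrow> sact X m n \<alpha> x \<in> ssimp X m) \<and>
     (\<forall>n x. x \<in> ssimp X n \<longrightarrow> sact X n n id x = x) \<and>
     (\<forall>k m n \<alpha> \<beta> x. mono_map m n \<alpha> \<longrightarrow> mono_map k m \<beta> \<longrightarrow> x \<in> ssimp X n \<longrightarrow>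
        sact X k m \<beta> (sact X m n \<alpha> x) = sact X k n (\<alpha> \<circ> \<beta>) x) \<and>
     (\<forall>m n \<alpha> \<alpha>' x. (\<forall>p\<le>m. \<alpha> p = \<alpha>' p) \<longrightarrow> x \<in> ssimp X n \<longrightarrow>
        sact X m n \<alpha> x = sact X m n \<alpha>' x)"

definition sset_map :: "'s sset \<Rightarrow> 't sset \<Rightarrow> (nat \<Rightarrow> 's \<Rightarrow> 't) \<Rightarrow> bool" where
  "sset_map A B g \<longleftrightarrow>
     (\<forall>n x. x \<in> ssimp A n \<longrightarrow> g n x \<in> ssimp B n) \<and>
     (\<forall>m n \<alpha> x. mono_map m n \<alpha> \<longrightarrow> x \<in> ssimp A n \<longrightarrow>
        g m (sact A m n \<alpha> x) = sact B m n \<alpha> (g n x)) \<and>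
     (\<forall>n x. x \<notin> ssimp A n \<longrightarrow> g n x = undefined)"

text \<open>The standard simplex Delta^J for a finite set J of naturals: its m-simplices are the
  monotone maps [m] -> J (normalised to 0 beyond m).\<close>
definition delta_simp :: "nat set \<Rightarrow> nat \<Rightarrow> (nat \<Rightarrow> nat) set" where
  "delta_simp J m = {\<beta>. (\<forall>p\<le>m. \<beta> p \<in> J) \<and> (\<forall>p q. p \<le> q \<longrightarrow> q \<le> m \<longrightarrow> \<beta> p \<le> \<beta> q)
                        \<and> (\<forall>p>m. \<beta> p = 0)}"

definition delta :: "nat set \<Rightarrow> (nat \<Rightarrow> nat) sset" where
  "delta J = \<lparr>ssimp = delta_simp J,
              sact = (\<lambda>m n \<alpha> \<beta>. (\<lambda>p. if p \<le> m then \<beta> (\<alpha> p) else 0))\<rparr>"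

text \<open>cat_comp D a b c f g is the composite  g o f  of f : a -> b and g : b -> c.\<close>
record ('o, 'm) cat =
  cat_ob :: "'o set"
  cat_hom :: "'o \<Rightarrow> 'o \<Rightarrow> 'm set"
  cat_comp :: "'o \<Rightarrow> 'o \<Rightarrow> 'o \<Rightarrow> 'm \<Rightarrow> 'm \<Rightarrow> 'm"
  cat_id :: "'o \<Rightarrow> 'm"

definition category :: "('o, 'm) cat \<Rightarrow> bool" where
  "category D \<longleftrightarrow>
     (\<forall>a\<in>cat_ob D. cat_id D a \<in> cat_hom D a a) \<and>
     (\<forall>a\<in>cat_ob D. \<forall>b\<in>cat_ob D. \<forall>c\<in>cat_ob D. \<forall>f\<in>cat_hom D a b. \<forall>g\<in>cat_hom D b c.
        cat_comp D a b c f g \<in> cat_hom D a c) \<and>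
     (\<forall>a\<in>cat_ob D. \<forall>b\<in>cat_ob D. \<forall>f\<in>cat_hom D a b.
        cat_comp D a a b (cat_id D a) f = f \<and> cat_comp D a b b f (cat_id D b) = f) \<and>
     (\<forall>a\<in>cat_ob D. \<forall>b\<in>cat_ob D. \<forall>c\<in>cat_ob D. \<forall>d\<in>cat_ob D.
      \<forall>f\<in>cat_hom D a b. \<forall>g\<in>cat_hom D b c. \<forall>h\<in>cat_hom D c d.
        cat_comp D a c d (cat_comp D a b c f g) h = cat_comp D a b d f (cat_comp D b c d g h))"

text \<open>n-simplices of the ordinary nerve N(D): functors [n] -> D, given by objects d_i and
  morphisms d_ij : d_i -> d_j for i <= j <= n.\<close>
definition ord_simp :: "('o, 'm) cat \<Rightarrow> nat \<Rightarrow> ((nat \<Rightarrow> 'o) \<times> (nat \<Rightarrow> nat \<Rightarrow> 'm)) set" where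
  "ord_simp D n = {(d, dm).
     (\<forall>i\<le>n. d i \<in> cat_ob D) \<and> (\<forall>i>n. d i = undefined) \<and>
     (\<forall>i j. i \<le> j \<longrightarrow> j \<le> n \<longrightarrow> dm i j \<in> cat_hom D (d i) (d j)) \<and>
     (\<forall>i j. \<not> (i \<le> j \<and> j \<le> n) \<longrightarrow> dm i j = undefined) \<and>
     (\<forall>i\<le>n. dm i i = cat_id D (d i)) \<and>
     (\<forall>i j k. i \<le> j \<longrightarrow> j \<le> k \<longrightarrow> k \<le> n \<longrightarrow>
        dm i k = cat_comp D (d i) (d j) (d k) (dm i j) (dm j k))}"

text \<open>scomp C x y z n f g is the composite  g o f  of n-simplices f in C(x,y), g in C(y,z);
  sid C x is the identity vertex of C(x,x).\<close>
record ('o, 'm) scat =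
  sobj :: "'o set"
  shom :: "'o \<Rightarrow> 'o \<Rightarrow> 'm sset"
  scomp :: "'o \<Rightarrow> 'o \<Rightarrow> 'o \<Rightarrow> nat \<Rightarrow> 'm \<Rightarrow> 'm \<Rightarrow> 'm"
  sid :: "'o \<Rightarrow> 'm"

definition degen0 :: "'m sset \<Rightarrow> nat \<Rightarrow> 'm \<Rightarrow> 'm" where
  "degen0 X n v = sact X n 0 (\<lambda>_. 0) v"

definition is_scat :: "('o, 'm) scat \<Rightarrow> bool" where
  "is_scat C \<longleftrightarrow>
     (\<forall>x\<in>sobj C. \<forall>y\<in>sobj C. is_sset (shom C x y)) \<and>
     (\<forall>x\<in>sobj C. sid C x \<in> ssimp (shom C x x) 0) \<and>
     (\<forall>x\<in>sobj C. \<forall>y\<in>sobj C. \<forall>z\<in>sobj C. \<forall>n.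
        \<forall>f\<in>ssimp (shom C x y) n. \<forall>g\<in>ssimp (shom C y z) n.
          scomp C x y z n f g \<in> ssimp (shom C x z) n) \<and>
     (\<forall>x\<in>sobj C. \<forall>y\<in>sobj C. \<forall>z\<in>sobj C. \<forall>m n \<alpha>.
        \<forall>f\<in>ssimp (shom C x y) n. \<forall>g\<in>ssimp (shom C y z) n. mono_map m n \<alpha> \<longrightarrow>
          scomp C x y z m (sact (shom C x y) m n \<alpha> f) (sact (shom C y z) m n \<alpha> g)
            = sact (shom C x z) m n \<alpha> (scomp C x y z n f g)) \<and>
     (\<forall>x\<in>sobj C. \<forall>y\<in>sobj C. \<forall>n. \<forall>f\<in>ssimp (shom C x y) n.
        scomp C x x y n (degen0 (shom C x x) n (sid C x)) f = f \<and>
        scomp C x y y n f (degen0 (shom C y y) n (sid C y)) = f) \<and>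
     (\<forall>w\<in>sobj C. \<forall>x\<in>sobj C. \<forall>y\<in>sobj C. \<forall>z\<in>sobj C. \<forall>n.
        \<forall>f\<in>ssimp (shom C w x) n. \<forall>g\<in>ssimp (shom C x y) n. \<forall>h\<in>ssimp (shom C y z) n.
          scomp C w y z n (scomp C w x y n f g) h = scomp C w x z n f (scomp C x y z n g h))"

definition sfunctor :: "('o, 'm) scat \<Rightarrow> ('p, 'n) scat \<Rightarrow> ('o \<Rightarrow> 'p)
    \<Rightarrow> (nat \<Rightarrow> 'o \<Rightarrow> 'o \<Rightarrow> 'm \<Rightarrow> 'n) \<Rightarrow> bool" where
  "sfunctor C C' Go Gh \<longleftrightarrow>
     (\<forall>x\<in>sobj C. Go x \<in> sobj C') \<and>
     (\<forall>x\<in>sobj C. \<forall>y\<in>sobj C. \<forall>n. \<forall>f\<in>ssimp (shom C x y) n.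
        Gh n x y f \<in> ssimp (shom C' (Go x) (Go y)) n) \<and>
     (\<forall>x\<in>sobj C. \<forall>y\<in>sobj C. \<forall>m n \<alpha>. \<forall>f\<in>ssimp (shom C x y) n. mono_map m n \<alpha> \<longrightarrow>
        Gh m x y (sact (shom C x y) m n \<alpha> f) = sact (shom C' (Go x) (Go y)) m n \<alpha> (Gh n x y f)) \<and>
     (\<forall>x\<in>sobj C. \<forall>y\<in>sobj C. \<forall>z\<in>sobj C. \<forall>n.
        \<forall>f\<in>ssimp (shom C x y) n. \<forall>g\<in>ssimp (shom C y z) n.
          Gh n x z (scomp C x y z n f g) = scomp C' (Go x) (Go y) (Go z) n (Gh n x y f) (Gh n y z g)) \<and>
     (\<forall>x\<in>sobj C. Gh 0 x x (sid C x) = sid C' (Go x))"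

definition scat_functor :: "('c, 'd) cat \<Rightarrow> ('c \<Rightarrow> ('o, 'm) scat) \<Rightarrow> ('d \<Rightarrow> 'o \<Rightarrow> 'o)
    \<Rightarrow> ('d \<Rightarrow> nat \<Rightarrow> 'o \<Rightarrow> 'o \<Rightarrow> 'm \<Rightarrow> 'm) \<Rightarrow> bool" where
  "scat_functor D Fo Fob Fhom \<longleftrightarrow>
     (\<forall>c\<in>cat_ob D. is_scat (Fo c)) \<and>
     (\<forall>c\<in>cat_ob D. \<forall>d\<in>cat_ob D. \<forall>\<phi>\<in>cat_hom D c d. sfunctor (Fo c) (Fo d) (Fob \<phi>) (Fhom \<phi>)) \<and>
     (\<forall>c\<in>cat_ob D. \<forall>x\<in>sobj (Fo c). Fob (cat_id D c) x = x) \<and>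
     (\<forall>c\<in>cat_ob D. \<forall>x\<in>sobj (Fo c). \<forall>y\<in>sobj (Fo c). \<forall>n. \<forall>f\<in>ssimp (shom (Fo c) x y) n.
        Fhom (cat_id D c) n x y f = f) \<and>
     (\<forall>c\<in>cat_ob D. \<forall>d\<in>cat_ob D. \<forall>e\<in>cat_ob D. \<forall>\<phi>\<in>cat_hom D c d. \<forall>\<psi>\<in>cat_hom D d e.
        (\<forall>x\<in>sobj (Fo c). Fob (cat_comp D c d e \<phi> \<psi>) x = Fob \<psi> (Fob \<phi> x)) \<and>
        (\<forall>x\<in>sobj (Fo c). \<forall>y\<in>sobj (Fo c). \<forall>n. \<forall>f\<in>ssimp (shom (Fo c) x y) n.
           Fhom (cat_comp D c d e \<phi> \<psi>) n x y f = Fhom \<psi> n (Fob \<phi> x) (Fob \<phi> y) (Fhom \<phi> n x y f)))"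

text \<open>k-simplices of N(P_ij), P_ij the poset of subsets of {i..j} containing i and j:
  chains S 0 <= ... <= S k (normalised to {} beyond k).\<close>
definition valid_chain :: "nat \<Rightarrow> nat \<Rightarrow> nat \<Rightarrow> (nat \<Rightarrow> nat set) \<Rightarrow> bool" where
  "valid_chain i j k S \<longleftrightarrow>
     (\<forall>l\<le>k. i \<in> S l \<and> j \<in> S l \<and> S l \<subseteq> {i..j}) \<and>
     (\<forall>l l'. l \<le> l' \<longrightarrow> l' \<le> k \<longrightarrow> S l \<subseteq> S l') \<and>
     (\<forall>l>k. S l = {})"

text \<open>n-simplices of N(C) = simplicial functors C[Delta^n] -> C: an object x i for each
  i <= n and compatible simplicial maps N(P_ij) -> C(x i, x j).\<close>
definition hc_simp :: "('o, 'm) scat \<Rightarrow> nat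
    \<Rightarrow> ((nat \<Rightarrow> 'o) \<times> (nat \<Rightarrow> nat \<Rightarrow> nat \<Rightarrow> (nat \<Rightarrow> nat set) \<Rightarrow> 'm)) set" where
  "hc_simp C n = {(x, \<sigma>).
     (\<forall>i\<le>n. x i \<in> sobj C) \<and> (\<forall>i>n. x i = undefined) \<and>
     (\<forall>i j k S. i \<le> j \<longrightarrow> j \<le> n \<longrightarrow> valid_chain i j k S \<longrightarrow>
        \<sigma> i j k S \<in> ssimp (shom C (x i) (x j)) k) \<and>
     (\<forall>i j k S. \<not> (i \<le> j \<and> j \<le> n \<and> valid_chain i j k S) \<longrightarrow> \<sigma> i j k S = undefined) \<and>
     (\<forall>i j k k' S \<beta>. i \<le> j \<longrightarrow> j \<le> n \<longrightarrow> valid_chain i j k S \<longrightarrow> mono_map k' k \<beta> \<longrightarrow>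
        sact (shom C (x i) (x j)) k' k \<beta> (\<sigma> i j k S)
          = \<sigma> i j k' (\<lambda>l. if l \<le> k' then S (\<beta> l) else {})) \<and>
     (\<forall>i j l k S T. i \<le> j \<longrightarrow> j \<le> l \<longrightarrow> l \<le> n \<longrightarrow> valid_chain i j k S \<longrightarrow> valid_chain j l k T \<longrightarrow>
        scomp C (x i) (x j) (x l) k (\<sigma> i j k S) (\<sigma> j l k T) = \<sigma> i l k (\<lambda>p. S p \<union> T p)) \<and>
     (\<forall>i k. i \<le> n \<longrightarrow>
        \<sigma> i i k (\<lambda>p. if p \<le> k then {i} else {}) = degen0 (shom C (x i) (x i)) k (sid C (x i)))}"

definition hc_act :: "nat \<Rightarrow> nat \<Rightarrow> (nat \<Rightarrow> nat)
    \<Rightarrow> (nat \<Rightarrow> 'o) \<times> (nat \<Rightarrow> nat \<Rightarrow> nat \<Rightarrow> (nat \<Rightarrow> nat set) \<Rightarrow> 'm)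
    \<Rightarrow> (nat \<Rightarrow> 'o) \<times> (nat \<Rightarrow> nat \<Rightarrow> nat \<Rightarrow> (nat \<Rightarrow> nat set) \<Rightarrow> 'm)" where
  "hc_act m n \<alpha> = (\<lambda>(x, \<sigma>).
     ((\<lambda>i. if i \<le> m then x (\<alpha> i) else undefined),
      (\<lambda>i j k S. if i \<le> j \<and> j \<le> m \<and> valid_chain i j k S
                 then \<sigma> (\<alpha> i) (\<alpha> j) k (\<lambda>l. \<alpha> ` S l) else undefined)))"

definition hc_nerve :: "('o, 'm) scat
    \<Rightarrow> ((nat \<Rightarrow> 'o) \<times> (nat \<Rightarrow> nat \<Rightarrow> nat \<Rightarrow> (nat \<Rightarrow> nat set) \<Rightarrow> 'm)) sset" where
  "hc_nerve C = \<lparr>ssimp = hc_simp C, sact = hc_act\<rparr>"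

definition hc_nerve_map :: "('o \<Rightarrow> 'p) \<Rightarrow> (nat \<Rightarrow> 'o \<Rightarrow> 'o \<Rightarrow> 'm \<Rightarrow> 'n) \<Rightarrow> nat
    \<Rightarrow> (nat \<Rightarrow> 'o) \<times> (nat \<Rightarrow> nat \<Rightarrow> nat \<Rightarrow> (nat \<Rightarrow> nat set) \<Rightarrow> 'm)
    \<Rightarrow> (nat \<Rightarrow> 'p) \<times> (nat \<Rightarrow> nat \<Rightarrow> nat \<Rightarrow> (nat \<Rightarrow> nat set) \<Rightarrow> 'n)" where
  "hc_nerve_map Go Gh n = (\<lambda>(x, \<sigma>).
     ((\<lambda>i. if i \<le> n then Go (x i) else undefined),
      (\<lambda>i j k S. if i \<le> j \<and> j \<le> n \<and> valid_chain i j k S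
                 then Gh k (x i) (x j) (\<sigma> i j k S) else undefined)))"

definition gr_scat :: "('c, 'd) cat \<Rightarrow> ('c \<Rightarrow> ('o, 'm) scat) \<Rightarrow> ('d \<Rightarrow> 'o \<Rightarrow> 'o)
    \<Rightarrow> ('d \<Rightarrow> nat \<Rightarrow> 'o \<Rightarrow> 'o \<Rightarrow> 'm \<Rightarrow> 'm) \<Rightarrow> ('o \<times> 'c, 'm \<times> 'd) scat" where
  "gr_scat D Fo Fob Fhom = \<lparr>
     sobj = {(x, c). c \<in> cat_ob D \<and> x \<in> sobj (Fo c)},
     shom = (\<lambda>(x, c) (y, d).
        \<lparr>ssimp = (\<lambda>n. {(\<tau>, \<phi>). \<phi> \<in> cat_hom D c d \<and> \<tau> \<in> ssimp (shom (Fo d) (Fob \<phi> x) y) n}),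
         sact = (\<lambda>m n \<alpha> (\<tau>, \<phi>). (sact (shom (Fo d) (Fob \<phi> x) y) m n \<alpha> \<tau>, \<phi>))\<rparr>),
     scomp = (\<lambda>(x, c) (y, d) (z, e) n (\<sigma>, \<phi>) (\<tau>, \<psi>).
        (scomp (Fo e) (Fob \<psi> (Fob \<phi> x)) (Fob \<psi> y) z n (Fhom \<psi> n (Fob \<phi> x) y \<sigma>) \<tau>,
         cat_comp D c d e \<phi> \<psi>)),
     sid = (\<lambda>(x, c). (sid (Fo c) x, cat_id D c))\<rparr>"

text \<open>Projection N(Gr F) -> N(D), induced by Gr F -> D (D discrete); the nerve of the
  discrete simplicial category D is identified with the ordinary nerve, the morphism d_ij
  being read off at the vertex {i,j} of N(P_ij).\<close>
definition gr_proj :: "nat \<Rightarrow> (nat \<Rightarrow> 'o \<times> 'c) \<times> (nat \<Rightarrow> nat \<Rightarrow> nat \<Rightarrow> (nat \<Rightarrow> nat set) \<Rightarrow> 'm \<times> 'd)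
    \<Rightarrow> (nat \<Rightarrow> 'c) \<times> (nat \<Rightarrow> nat \<Rightarrow> 'd)" where
  "gr_proj n = (\<lambda>(x, \<sigma>).
     ((\<lambda>i. if i \<le> n then snd (x i) else undefined),
      (\<lambda>i j. if i \<le> j \<and> j \<le> n then snd (\<sigma> i j 0 (\<lambda>l. if l = 0 then {i, j} else {}))
             else undefined)))"

text \<open>n-simplices of N_f(D) for f = (fo, fm) : D -> sSet: a functor (d, dm) : [n] -> D and,
  for each nonempty J <= [n], a simplicial map s J : Delta^J -> f(d_{max J}), such that
  f(d_ij) o s^I = s^J restricted to Delta^I for I <= J.\<close>
definition rel_simp :: "('c, 'd) cat \<Rightarrow> ('c \<Rightarrow> 's sset) \<Rightarrow> ('d \<Rightarrow> nat \<Rightarrow> 's \<Rightarrow> 's) \<Rightarrow> nat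
    \<Rightarrow> ((nat \<Rightarrow> 'c) \<times> (nat \<Rightarrow> nat \<Rightarrow> 'd) \<times> (nat set \<Rightarrow> nat \<Rightarrow> (nat \<Rightarrow> nat) \<Rightarrow> 's)) set" where
  "rel_simp D fo fm n = {(d, dm, s).
     (d, dm) \<in> ord_simp D n \<and>
     (\<forall>J. J \<noteq> {} \<longrightarrow> J \<subseteq> {0..n} \<longrightarrow> sset_map (delta J) (fo (d (Max J))) (s J)) \<and>
     (\<forall>J. \<not> (J \<noteq> {} \<and> J \<subseteq> {0..n}) \<longrightarrow> s J = (\<lambda>m \<beta>. undefined)) \<and>
     (\<forall>I J. I \<noteq> {} \<longrightarrow> I \<subseteq> J \<longrightarrow> J \<subseteq> {0..n} \<longrightarrow>
        (\<forall>m \<beta>. \<beta> \<in> delta_simp I m \<longrightarrow> fm (dm (Max I) (Max J)) m (s I m \<beta>) = s J m \<beta>))}"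

definition rel_act :: "nat \<Rightarrow> nat \<Rightarrow> (nat \<Rightarrow> nat)
    \<Rightarrow> (nat \<Rightarrow> 'c) \<times> (nat \<Rightarrow> nat \<Rightarrow> 'd) \<times> (nat set \<Rightarrow> nat \<Rightarrow> (nat \<Rightarrow> nat) \<Rightarrow> 's)
    \<Rightarrow> (nat \<Rightarrow> 'c) \<times> (nat \<Rightarrow> nat \<Rightarrow> 'd) \<times> (nat set \<Rightarrow> nat \<Rightarrow> (nat \<Rightarrow> nat) \<Rightarrow> 's)" where
  "rel_act m n \<alpha> = (\<lambda>(d, dm, s).
     ((\<lambda>i. if i \<le> m then d (\<alpha> i) else undefined),
      (\<lambda>i j. if i \<le> j \<and> j \<le> m then dm (\<alpha> i) (\<alpha> j) else undefined),
      (\<lambda>J. if J \<noteq> {} \<and> J \<subseteq> {0..m}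
            then (\<lambda>k \<beta>. if \<beta> \<in> delta_simp J k
                         then s (\<alpha> ` J) k (\<lambda>p. if p \<le> k then \<alpha> (\<beta> p) else 0)
                         else undefined)
            else (\<lambda>k \<beta>. undefined))))"

definition rel_proj :: "(nat \<Rightarrow> 'c) \<times> (nat \<Rightarrow> nat \<Rightarrow> 'd) \<times> (nat set \<Rightarrow> nat \<Rightarrow> (nat \<Rightarrow> nat) \<Rightarrow> 's)
    \<Rightarrow> (nat \<Rightarrow> 'c) \<times> (nat \<Rightarrow> nat \<Rightarrow> 'd)" where
  "rel_proj = (\<lambda>(d, dm, s). (d, dm))"

end

theory Submission
  imports Defs
begin

text \<open>An n-simplex of N(Gr F) consists of objects (x_i, c_i) and coherent families
  sigma_ij : N(P_ij) -> Gr F((x_i, c_i), (x_j, c_j)). Since N(P_ij) is connected and D is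
  discrete, the D-component of sigma_ij is a single morphism d_ij, and these form a functor
  [n] -> D. Transporting the fibre components of the restriction of the simplex along
  beta : [m] -> J forward along the morphisms d_(beta p, max J) gives an m-simplex of
  N(F(d_(max J))); this defines the maps s^J of a simplex of the relative nerve.
  Conversely, a simplex of the relative nerve is determined by its vertices s^{i} and by
  the top simplices of the s^[i..j], which give back the objects x_i and the families
  sigma_ij. The two constructions are mutually inverse, natural in [n], and both keep the
  underlying functor [n] -> D.\<close>

type_synonym ('o, 'm) hc_simplex = "(nat \<Rightarrow> 'o) \<times> (nat \<Rightarrow> nat \<Rightarrow> nat \<Rightarrow> (nat \<Rightarrow> nat set) \<Rightarrow> 'm)"

type_synonym ('c, 'd, 's) rel_simplex =
  "(nat \<Rightarrow> 'c) \<times> (nat \<Rightarrow> nat \<Rightarrow> 'd) \<times> (nat set \<Rightarrow> nat \<Rightarrow> (nat \<Rightarrow> nat) \<Rightarrow> 's)"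

lemma valid_chain_le: "valid_chain i j k S \<Longrightarrow> i \<le> j"
  unfolding valid_chain_def by (metis atLeastAtMost_iff le0 subsetD)

lemma valid_chain_subset: "valid_chain i j k S \<Longrightarrow> S l \<subseteq> {i..j}"
  unfolding valid_chain_def by (cases "l \<le> k") auto

lemma valid_chain_vertex_iff:
  "valid_chain i j 0 (\<lambda>l. if l = 0 then A else {}) \<longleftrightarrow> i \<in> A \<and> j \<in> A \<and> A \<subseteq> {i..j}"
  unfolding valid_chain_def by auto

lemma valid_chain_const: "valid_chain i i k (\<lambda>l. if l \<le> k then {i} else {})"
  unfolding valid_chain_def by auto

lemma valid_chain_image:
  assumes S: "valid_chain i j k S" and mono: "\<And>p q. p \<le> q \<Longrightarrow> q \<le> j \<Longrightarrow> \<beta> p \<le> \<beta> q"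
  shows "valid_chain (\<beta> i) (\<beta> j) k (\<lambda>l. \<beta> ` S l)"
proof -
  have "\<beta> ` S l \<subseteq> {\<beta> i..\<beta> j}" for l
  proof
    fix y assume "y \<in> \<beta> ` S l"
    then obtain t where t: "t \<in> S l" "y = \<beta> t" by blast
    then have "i \<le> t" "t \<le> j" using valid_chain_subset[OF S, of l] by auto
    then show "y \<in> {\<beta> i..\<beta> j}" using mono[of i t] mono[of t j] t(2) by simp
  qed
  moreover have "\<beta> ` S l \<subseteq> \<beta> ` S l'" if "l \<le> l'" "l' \<le> k" for l l'
    using S that unfolding valid_chain_def by (intro image_mono) blast
  ultimately show ?thesis
    using S unfolding valid_chain_def by auto
qed

lemma valid_chain_shift:
  assumes "valid_chain i j k S"
  shows "valid_chain (i - h) (j - h) k (\<lambda>l. (\<lambda>t. t - h) ` S l)"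
proof -
  have "valid_chain ((\<lambda>t. t - h) i) ((\<lambda>t. t - h) j) k (\<lambda>l. (\<lambda>t. t - h) ` S l)"
    using assms by (rule valid_chain_image) (rule diff_le_mono)
  then show ?thesis by simp
qed

lemma valid_chain_reindex:
  "valid_chain i j k S \<Longrightarrow> mono_map k' k \<beta> \<Longrightarrow>
     valid_chain i j k' (\<lambda>l. if l \<le> k' then S (\<beta> l) else {})"
  unfolding valid_chain_def mono_map_def by auto

lemma valid_chain_union:
  assumes S: "valid_chain i j k S" and T: "valid_chain j l k T"
  shows "valid_chain i l k (\<lambda>p. S p \<union> T p)"
  unfolding valid_chain_def
proof (intro conjI allI impI)
  fix p assume p: "p \<le> k"
  show "i \<in> S p \<union> T p" using S p unfolding valid_chain_def by blast
  show "l \<in> S p \<union> T p" using T p unfolding valid_chain_def by blast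
  show "S p \<union> T p \<subseteq> {i..l}"
    using valid_chain_subset[OF S, of p] valid_chain_subset[OF T, of p]
      valid_chain_le[OF S] valid_chain_le[OF T] by auto
next
  fix p p' assume "p \<le> p'" "p' \<le> k"
  then have "S p \<subseteq> S p'" "T p \<subseteq> T p'" using S T unfolding valid_chain_def by blast+
  then show "S p \<union> T p \<subseteq> S p' \<union> T p'" by blast
next
  fix p assume "k < p"
  then show "S p \<union> T p = {}" using S T unfolding valid_chain_def by simp
qed

lemma valid_chain_image_cong:
  assumes "valid_chain i j k S" and "\<And>t. i \<le> t \<Longrightarrow> t \<le> j \<Longrightarrow> f t = g t"
  shows "(\<lambda>l. f ` S l) = (\<lambda>l. g ` S l)"
proof
  fix l show "f ` S l = g ` S l"
    using valid_chain_subset[OF assms(1), of l] assms(2) by (intro image_cong) auto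
qed

lemma mono_map_const: "c \<le> n \<Longrightarrow> mono_map m n (\<lambda>_. c)"
  unfolding mono_map_def by auto

lemma mono_map_le: "mono_map m t \<beta> \<Longrightarrow> p \<le> m \<Longrightarrow> \<beta> p \<le> t"
  unfolding mono_map_def by blast

lemma mono_map_mono: "mono_map m t \<beta> \<Longrightarrow> p \<le> q \<Longrightarrow> q \<le> m \<Longrightarrow> \<beta> p \<le> \<beta> q"
  unfolding mono_map_def by blast

lemma valid_chain_mono_map_image:
  "mono_map m t \<beta> \<Longrightarrow> q \<le> m \<Longrightarrow> valid_chain p q k T \<Longrightarrow>
     valid_chain (\<beta> p) (\<beta> q) k (\<lambda>l. \<beta> ` T l)"
  by (rule valid_chain_image) (auto intro: mono_map_mono)

lemma delta_simp_mem: "\<beta> \<in> delta_simp J m \<Longrightarrow> p \<le> m \<Longrightarrow> \<beta> p \<in> J"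
  unfolding delta_simp_def by auto

lemma delta_simp_mono: "\<beta> \<in> delta_simp J m \<Longrightarrow> p \<le> q \<Longrightarrow> q \<le> m \<Longrightarrow> \<beta> p \<le> \<beta> q"
  unfolding delta_simp_def by auto

lemma delta_simp_act:
  "\<beta> \<in> delta_simp J m \<Longrightarrow> mono_map m' m \<alpha> \<Longrightarrow>
     (\<lambda>p. if p \<le> m' then \<beta> (\<alpha> p) else 0) \<in> delta_simp J m'"
  unfolding delta_simp_def mono_map_def by auto

lemma delta_simp_mono_map: "\<beta> \<in> delta_simp J m \<Longrightarrow> J \<subseteq> {0..t} \<Longrightarrow> mono_map m t \<beta>"
  unfolding delta_simp_def mono_map_def by auto

lemma delta_simp_image:
  assumes "\<beta> \<in> delta_simp J k" "J \<subseteq> {0..m}" "mono_map m n \<alpha>"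
  shows "(\<lambda>p. if p \<le> k then \<alpha> (\<beta> p) else 0) \<in> delta_simp (\<alpha> ` J) k"
proof -
  have "\<beta> p \<le> m" if "p \<le> k" for p using delta_simp_mem[OF assms(1) that] assms(2) by auto
  then show ?thesis
    using assms(1) mono_map_mono[OF assms(3)] unfolding delta_simp_def by auto
qed

definition vertex_simplex :: "nat \<Rightarrow> nat \<Rightarrow> nat" where
  "vertex_simplex i = (\<lambda>p. if p = 0 then i else 0)"

definition interval_simplex :: "nat \<Rightarrow> nat \<Rightarrow> nat \<Rightarrow> nat" where
  "interval_simplex i j = (\<lambda>p. if p \<le> j - i then i + p else 0)"

lemma vertex_simplex_in: "vertex_simplex i \<in> delta_simp {i} 0"
  unfolding vertex_simplex_def delta_simp_def by auto

lemma interval_simplex_in: "i \<le> j \<Longrightarrow> interval_simplex i j \<in> delta_simp {i..j} (j - i)"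
  unfolding interval_simplex_def delta_simp_def by auto

lemma interval_simplex_apply: "p \<le> j - i \<Longrightarrow> interval_simplex i j p = i + p"
  unfolding interval_simplex_def by simp

lemma interval_simplex_shift:
  assumes "valid_chain p q k S" "i \<le> p" "q \<le> j"
  shows "interval_simplex i j ` (\<lambda>t. t - i) ` S l = S l"
proof -
  have "(\<lambda>l. (\<lambda>t. interval_simplex i j (t - i)) ` S l) = (\<lambda>l. id ` S l)"
    using assms by (intro valid_chain_image_cong) (auto simp: interval_simplex_def)
  then show ?thesis unfolding image_image by (simp add: fun_eq_iff)
qed

lemma Max_atLeastAtMost_nat: "i \<le> j \<Longrightarrow> Max {i..j::nat} = j"
  by (rule Max_eqI) auto

lemma finite_subset_atLeastAtMost: "J \<subseteq> {0..n::nat} \<Longrightarrow> finite J"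
  using finite_subset by blast

lemma Max_bounded_in:
  assumes "J \<noteq> {}" "J \<subseteq> {0..n::nat}"
  shows "Max J \<in> J \<and> Max J \<le> n"
proof -
  have "Max J \<in> J" using Max_in[OF finite_subset_atLeastAtMost] assms by blast
  then show ?thesis using assms(2) by auto
qed

lemma Max_bounded_ge: "J \<subseteq> {0..n::nat} \<Longrightarrow> x \<in> J \<Longrightarrow> x \<le> Max J"
  using Max_ge[OF finite_subset_atLeastAtMost] by blast

lemma Max_mono_map_image:
  assumes \<alpha>: "mono_map m n \<alpha>" and J: "J \<noteq> {}" "J \<subseteq> {0..m}"
  shows "Max (\<alpha> ` J) = \<alpha> (Max J)"
proof (rule Max_eqI)
  show "finite (\<alpha> ` J)" using finite_subset_atLeastAtMost[OF J(2)] by simp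
  show "\<alpha> (Max J) \<in> \<alpha> ` J" using Max_bounded_in[OF J] by simp
  show "y \<le> \<alpha> (Max J)" if "y \<in> \<alpha> ` J" for y
    using that Max_bounded_in[OF J] Max_bounded_ge[OF J(2)] mono_map_mono[OF \<alpha>] by auto
qed

lemma hc_nerve_simps [simp]: "ssimp (hc_nerve C) = hc_simp C" "sact (hc_nerve C) = hc_act"
  by (simp_all add: hc_nerve_def)

lemma delta_simps [simp]:
  "ssimp (delta J) = delta_simp J"
  "sact (delta J) m n \<alpha> \<beta> = (\<lambda>p. if p \<le> m then \<beta> (\<alpha> p) else 0)"
  by (simp_all add: delta_def)

lemma hc_simp_iff: "z \<in> hc_simp C n \<longleftrightarrow>
     (\<forall>i\<le>n. fst z i \<in> sobj C) \<and> (\<forall>i>n. fst z i = undefined) \<and>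
     (\<forall>i j k S. i \<le> j \<longrightarrow> j \<le> n \<longrightarrow> valid_chain i j k S \<longrightarrow>
        snd z i j k S \<in> ssimp (shom C (fst z i) (fst z j)) k) \<and>
     (\<forall>i j k S. \<not> (i \<le> j \<and> j \<le> n \<and> valid_chain i j k S) \<longrightarrow> snd z i j k S = undefined) \<and>
     (\<forall>i j k k' S \<beta>. i \<le> j \<longrightarrow> j \<le> n \<longrightarrow> valid_chain i j k S \<longrightarrow> mono_map k' k \<beta> \<longrightarrow>
        sact (shom C (fst z i) (fst z j)) k' k \<beta> (snd z i j k S)
          = snd z i j k' (\<lambda>l. if l \<le> k' then S (\<beta> l) else {})) \<and>
     (\<forall>i j l k S T. i \<le> j \<longrightarrow> j \<le> l \<longrightarrow> l \<le> n \<longrightarrow> valid_chain i j k S \<longrightarrow> valid_chain j l k T \<longrightarrow>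
        scomp C (fst z i) (fst z j) (fst z l) k (snd z i j k S) (snd z j l k T)
          = snd z i l k (\<lambda>p. S p \<union> T p)) \<and>
     (\<forall>i k. i \<le> n \<longrightarrow> snd z i i k (\<lambda>p. if p \<le> k then {i} else {})
          = degen0 (shom C (fst z i) (fst z i)) k (sid C (fst z i)))"
  by (cases z) (simp add: hc_simp_def)

lemma hc_simpI:
  assumes "\<And>i. i \<le> n \<Longrightarrow> fst z i \<in> sobj C"
    and "\<And>i. n < i \<Longrightarrow> fst z i = undefined"
    and "\<And>i j k S. i \<le> j \<Longrightarrow> j \<le> n \<Longrightarrow> valid_chain i j k S \<Longrightarrow>
           snd z i j k S \<in> ssimp (shom C (fst z i) (fst z j)) k"
    and "\<And>i j k S. \<not> (i \<le> j \<and> j \<le> n \<and> valid_chain i j k S) \<Longrightarrow> snd z i j k S = undefined"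
    and "\<And>i j k k' S \<beta>. i \<le> j \<Longrightarrow> j \<le> n \<Longrightarrow> valid_chain i j k S \<Longrightarrow> mono_map k' k \<beta> \<Longrightarrow>
           sact (shom C (fst z i) (fst z j)) k' k \<beta> (snd z i j k S)
             = snd z i j k' (\<lambda>l. if l \<le> k' then S (\<beta> l) else {})"
    and "\<And>i j l k S T. i \<le> j \<Longrightarrow> j \<le> l \<Longrightarrow> l \<le> n \<Longrightarrow>
           valid_chain i j k S \<Longrightarrow> valid_chain j l k T \<Longrightarrow>
           scomp C (fst z i) (fst z j) (fst z l) k (snd z i j k S) (snd z j l k T)
             = snd z i l k (\<lambda>p. S p \<union> T p)"
    and "\<And>i k. i \<le> n \<Longrightarrow> snd z i i k (\<lambda>p. if p \<le> k then {i} else {})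
           = degen0 (shom C (fst z i) (fst z i)) k (sid C (fst z i))"
  shows "z \<in> hc_simp C n"
  unfolding hc_simp_iff using assms by (intro conjI allI impI) simp_all

context
  fixes C n z assumes z: "z \<in> hc_simp C n"
begin

lemma hc_simp_ob: "i \<le> n \<Longrightarrow> fst z i \<in> sobj C"
  using z unfolding hc_simp_iff by simp

lemma hc_simp_ob_undef: "\<not> i \<le> n \<Longrightarrow> fst z i = undefined"
  using z unfolding hc_simp_iff by simp

lemma hc_simp_hom:
  "i \<le> j \<Longrightarrow> j \<le> n \<Longrightarrow> valid_chain i j k S \<Longrightarrow> snd z i j k S \<in> ssimp (shom C (fst z i) (fst z j)) k"
  using z unfolding hc_simp_iff by simp

lemma hc_simp_hom_undef: "\<not> (i \<le> j \<and> j \<le> n \<and> valid_chain i j k S) \<Longrightarrow> snd z i j k S = undefined"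
  using z unfolding hc_simp_iff by simp

lemma hc_simp_sact:
  "i \<le> j \<Longrightarrow> j \<le> n \<Longrightarrow> valid_chain i j k S \<Longrightarrow> mono_map k' k \<beta> \<Longrightarrow>
     sact (shom C (fst z i) (fst z j)) k' k \<beta> (snd z i j k S)
       = snd z i j k' (\<lambda>l. if l \<le> k' then S (\<beta> l) else {})"
  using z unfolding hc_simp_iff by simp

lemma hc_simp_comp:
  "i \<le> j \<Longrightarrow> j \<le> l \<Longrightarrow> l \<le> n \<Longrightarrow> valid_chain i j k S \<Longrightarrow> valid_chain j l k T \<Longrightarrow>
     scomp C (fst z i) (fst z j) (fst z l) k (snd z i j k S) (snd z j l k T)
       = snd z i l k (\<lambda>p. S p \<union> T p)"
  using z unfolding hc_simp_iff by simp

lemma hc_simp_id: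
  "i \<le> n \<Longrightarrow> snd z i i k (\<lambda>p. if p \<le> k then {i} else {})
     = degen0 (shom C (fst z i) (fst z i)) k (sid C (fst z i))"
  using z unfolding hc_simp_iff by simp

end

lemma hc_act_fst: "i \<le> m \<Longrightarrow> fst (hc_act m n \<alpha> z) i = fst z (\<alpha> i)"
  by (simp add: hc_act_def case_prod_unfold)

lemma hc_act_snd:
  "i \<le> j \<Longrightarrow> j \<le> m \<Longrightarrow> valid_chain i j k S \<Longrightarrow>
     snd (hc_act m n \<alpha> z) i j k S = snd z (\<alpha> i) (\<alpha> j) k (\<lambda>l. \<alpha> ` S l)"
  by (simp add: hc_act_def case_prod_unfold)

lemma hc_act_fst_undef: "\<not> i \<le> m \<Longrightarrow> fst (hc_act m n \<alpha> z) i = undefined"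
  by (auto simp: hc_act_def case_prod_unfold)

lemma hc_act_snd_undef:
  "\<not> (i \<le> j \<and> j \<le> m \<and> valid_chain i j k S) \<Longrightarrow> snd (hc_act m n \<alpha> z) i j k S = undefined"
  by (auto simp: hc_act_def case_prod_unfold)

lemma hc_nerve_map_fst: "i \<le> m \<Longrightarrow> fst (hc_nerve_map Go Gh m z) i = Go (fst z i)"
  by (simp add: hc_nerve_map_def case_prod_unfold)

lemma hc_nerve_map_snd:
  "i \<le> j \<Longrightarrow> j \<le> m \<Longrightarrow> valid_chain i j k S \<Longrightarrow>
     snd (hc_nerve_map Go Gh m z) i j k S = Gh k (fst z i) (fst z j) (snd z i j k S)"
  by (simp add: hc_nerve_map_def case_prod_unfold)

lemma hc_nerve_map_fst_undef: "\<not> i \<le> m \<Longrightarrow> fst (hc_nerve_map Go Gh m z) i = undefined"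
  by (auto simp: hc_nerve_map_def case_prod_unfold)

lemma hc_nerve_map_snd_undef:
  "\<not> (i \<le> j \<and> j \<le> m \<and> valid_chain i j k S) \<Longrightarrow> snd (hc_nerve_map Go Gh m z) i j k S = undefined"
  by (auto simp: hc_nerve_map_def case_prod_unfold)

lemma gr_scat_sobj_iff:
  "X \<in> sobj (gr_scat D Fo Fob Fhom) \<longleftrightarrow> snd X \<in> cat_ob D \<and> fst X \<in> sobj (Fo (snd X))"
  by (cases X) (auto simp: gr_scat_def)

lemma gr_scat_ssimp_iff:
  "f \<in> ssimp (shom (gr_scat D Fo Fob Fhom) X Y) k \<longleftrightarrow>
     snd f \<in> cat_hom D (snd X) (snd Y) \<and>
     fst f \<in> ssimp (shom (Fo (snd Y)) (Fob (snd f) (fst X)) (fst Y)) k"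
  by (cases X; cases Y; cases f) (auto simp: gr_scat_def)

lemma gr_scat_sact:
  "sact (shom (gr_scat D Fo Fob Fhom) X Y) m n \<alpha> f =
     (sact (shom (Fo (snd Y)) (Fob (snd f) (fst X)) (fst Y)) m n \<alpha> (fst f), snd f)"
  by (cases X; cases Y; cases f) (auto simp: gr_scat_def)

lemma gr_scat_scomp:
  "scomp (gr_scat D Fo Fob Fhom) X Y Z n f g =
     (scomp (Fo (snd Z)) (Fob (snd g) (Fob (snd f) (fst X))) (Fob (snd g) (fst Y)) (fst Z) n
        (Fhom (snd g) n (Fob (snd f) (fst X)) (fst Y) (fst f)) (fst g),
      cat_comp D (snd X) (snd Y) (snd Z) (snd f) (snd g))"
  by (cases X; cases Y; cases Z; cases f; cases g) (auto simp: gr_scat_def)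

lemma gr_scat_sid: "sid (gr_scat D Fo Fob Fhom) X = (sid (Fo (snd X)) (fst X), cat_id D (snd X))"
  by (cases X) (auto simp: gr_scat_def)

lemma gr_scat_degen0:
  "degen0 (shom (gr_scat D Fo Fob Fhom) X Y) k f =
     (degen0 (shom (Fo (snd Y)) (Fob (snd f) (fst X)) (fst Y)) k (fst f), snd f)"
  by (simp add: degen0_def gr_scat_sact)

text \<open>ord_simp without its extensionality conditions, so that it applies directly to the
  base c_i = snd (x_i) of a simplex (x, sigma) of N(Gr F).\<close>

definition chain_functor :: "('c, 'd) cat \<Rightarrow> nat \<Rightarrow> (nat \<Rightarrow> 'c) \<Rightarrow> (nat \<Rightarrow> nat \<Rightarrow> 'd) \<Rightarrow> bool" where
  "chain_functor D n d dm \<longleftrightarrow>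
     (\<forall>i\<le>n. d i \<in> cat_ob D) \<and>
     (\<forall>i j. i \<le> j \<longrightarrow> j \<le> n \<longrightarrow> dm i j \<in> cat_hom D (d i) (d j)) \<and>
     (\<forall>i\<le>n. dm i i = cat_id D (d i)) \<and>
     (\<forall>i j k. i \<le> j \<longrightarrow> j \<le> k \<longrightarrow> k \<le> n \<longrightarrow>
        dm i k = cat_comp D (d i) (d j) (d k) (dm i j) (dm j k))"

lemma chain_functor_cong:
  "(\<And>i. i \<le> n \<Longrightarrow> d i = d' i) \<Longrightarrow> chain_functor D n d dm \<longleftrightarrow> chain_functor D n d' dm"
  unfolding chain_functor_def by (auto intro: order_trans)

lemma ord_simp_iff:
  "(d, dm) \<in> ord_simp D n \<longleftrightarrow> chain_functor D n d dm \<and> (\<forall>i>n. d i = undefined) \<and>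
     (\<forall>i j. \<not> (i \<le> j \<and> j \<le> n) \<longrightarrow> dm i j = undefined)"
  unfolding ord_simp_def chain_functor_def by auto

context
  fixes D n d dm assumes F: "chain_functor D n d dm"
begin

lemma chain_functor_ob: "i \<le> n \<Longrightarrow> d i \<in> cat_ob D"
  using F unfolding chain_functor_def by blast

lemma chain_functor_hom: "i \<le> j \<Longrightarrow> j \<le> n \<Longrightarrow> dm i j \<in> cat_hom D (d i) (d j)"
  using F unfolding chain_functor_def by blast

lemma chain_functor_id: "i \<le> n \<Longrightarrow> dm i i = cat_id D (d i)"
  using F unfolding chain_functor_def by blast

lemma chain_functor_comp:
  "i \<le> j \<Longrightarrow> j \<le> k \<Longrightarrow> k \<le> n \<Longrightarrow> dm i k = cat_comp D (d i) (d j) (d k) (dm i j) (dm j k)"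
  using F unfolding chain_functor_def by blast

end

lemma sset_map_in: "sset_map A B g \<Longrightarrow> x \<in> ssimp A n \<Longrightarrow> g n x \<in> ssimp B n"
  unfolding sset_map_def by blast

lemma sset_map_natural:
  "sset_map A B g \<Longrightarrow> mono_map m n \<alpha> \<Longrightarrow> x \<in> ssimp A n \<Longrightarrow>
     g m (sact A m n \<alpha> x) = sact B m n \<alpha> (g n x)"
  unfolding sset_map_def by blast

lemma sset_map_undef: "sset_map A B g \<Longrightarrow> x \<notin> ssimp A n \<Longrightarrow> g n x = undefined"
  unfolding sset_map_def by blast

lemma rel_simp_iff:
  "(d, dm, s) \<in> rel_simp D fo fm n \<longleftrightarrow>
     (d, dm) \<in> ord_simp D n \<and>
     (\<forall>J. J \<noteq> {} \<longrightarrow> J \<subseteq> {0..n} \<longrightarrow> sset_map (delta J) (fo (d (Max J))) (s J)) \<and>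
     (\<forall>J. \<not> (J \<noteq> {} \<and> J \<subseteq> {0..n}) \<longrightarrow> s J = (\<lambda>m \<beta>. undefined)) \<and>
     (\<forall>I J. I \<noteq> {} \<longrightarrow> I \<subseteq> J \<longrightarrow> J \<subseteq> {0..n} \<longrightarrow>
        (\<forall>m \<beta>. \<beta> \<in> delta_simp I m \<longrightarrow> fm (dm (Max I) (Max J)) m (s I m \<beta>) = s J m \<beta>))"
  unfolding rel_simp_def by simp

context
  fixes d dm s D fo fm n assumes r: "(d, dm, s) \<in> rel_simp D fo fm n"
begin

lemma rel_simp_ord: "(d, dm) \<in> ord_simp D n"
  using r unfolding rel_simp_iff by simp

lemma rel_simp_sset_map: "J \<noteq> {} \<Longrightarrow> J \<subseteq> {0..n} \<Longrightarrow> sset_map (delta J) (fo (d (Max J))) (s J)"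
  using r unfolding rel_simp_iff by simp

lemma rel_simp_undef:
  assumes "\<not> (J \<noteq> {} \<and> J \<subseteq> {0..n})"
  shows "s J = (\<lambda>m \<beta>. undefined)"
proof -
  have "\<forall>J. \<not> (J \<noteq> {} \<and> J \<subseteq> {0..n}) \<longrightarrow> s J = (\<lambda>m \<beta>. undefined)"
    using r unfolding rel_simp_iff by simp
  then show ?thesis using assms by blast
qed

lemma rel_simp_compat:
  "I \<noteq> {} \<Longrightarrow> I \<subseteq> J \<Longrightarrow> J \<subseteq> {0..n} \<Longrightarrow> \<beta> \<in> delta_simp I m \<Longrightarrow>
     fm (dm (Max I) (Max J)) m (s I m \<beta>) = s J m \<beta>"
  using r unfolding rel_simp_iff by simp

end

locale scat_diagram =
  fixes D :: "('c, 'd) cat"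
    and Fo :: "'c \<Rightarrow> ('o, 'm) scat"
    and Fob :: "'d \<Rightarrow> 'o \<Rightarrow> 'o"
    and Fhom :: "'d \<Rightarrow> nat \<Rightarrow> 'o \<Rightarrow> 'o \<Rightarrow> 'm \<Rightarrow> 'm"
  assumes scat_functor: "scat_functor D Fo Fob Fhom"
begin

abbreviation G :: "('o \<times> 'c, 'm \<times> 'd) scat" where
  "G \<equiv> gr_scat D Fo Fob Fhom"

abbreviation fo :: "'c \<Rightarrow> ('o, 'm) hc_simplex sset" where
  "fo c \<equiv> hc_nerve (Fo c)"

abbreviation fm :: "'d \<Rightarrow> nat \<Rightarrow> ('o, 'm) hc_simplex \<Rightarrow> ('o, 'm) hc_simplex" where
  "fm \<phi> \<equiv> hc_nerve_map (Fob \<phi>) (Fhom \<phi>)"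

lemma Fo_is_scat: "c \<in> cat_ob D \<Longrightarrow> is_scat (Fo c)"
  using scat_functor unfolding scat_functor_def by simp

lemma Fo_sid_in: "c \<in> cat_ob D \<Longrightarrow> x \<in> sobj (Fo c) \<Longrightarrow> sid (Fo c) x \<in> ssimp (shom (Fo c) x x) 0"
  using Fo_is_scat unfolding is_scat_def by simp

lemma Fob_id: "c \<in> cat_ob D \<Longrightarrow> x \<in> sobj (Fo c) \<Longrightarrow> Fob (cat_id D c) x = x"
  using scat_functor unfolding scat_functor_def by simp

lemma Fhom_id:
  "c \<in> cat_ob D \<Longrightarrow> x \<in> sobj (Fo c) \<Longrightarrow> y \<in> sobj (Fo c) \<Longrightarrow> f \<in> ssimp (shom (Fo c) x y) n \<Longrightarrow>
     Fhom (cat_id D c) n x y f = f"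
  using scat_functor unfolding scat_functor_def by simp

context
  fixes c d \<phi>
  assumes c: "c \<in> cat_ob D" and d: "d \<in> cat_ob D" and \<phi>: "\<phi> \<in> cat_hom D c d"
begin

lemma sfunctor_Fob_Fhom: "sfunctor (Fo c) (Fo d) (Fob \<phi>) (Fhom \<phi>)"
  using scat_functor c d \<phi> unfolding scat_functor_def by simp

lemma Fob_in: "x \<in> sobj (Fo c) \<Longrightarrow> Fob \<phi> x \<in> sobj (Fo d)"
  using sfunctor_Fob_Fhom unfolding sfunctor_def by simp

lemma Fhom_in:
  "x \<in> sobj (Fo c) \<Longrightarrow> y \<in> sobj (Fo c) \<Longrightarrow> f \<in> ssimp (shom (Fo c) x y) n \<Longrightarrow>
     Fhom \<phi> n x y f \<in> ssimp (shom (Fo d) (Fob \<phi> x) (Fob \<phi> y)) n"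
  using sfunctor_Fob_Fhom unfolding sfunctor_def by simp

lemma Fhom_sact:
  "x \<in> sobj (Fo c) \<Longrightarrow> y \<in> sobj (Fo c) \<Longrightarrow> f \<in> ssimp (shom (Fo c) x y) n \<Longrightarrow> mono_map m n \<alpha> \<Longrightarrow>
     Fhom \<phi> m x y (sact (shom (Fo c) x y) m n \<alpha> f)
       = sact (shom (Fo d) (Fob \<phi> x) (Fob \<phi> y)) m n \<alpha> (Fhom \<phi> n x y f)"
  using sfunctor_Fob_Fhom unfolding sfunctor_def by simp

lemma Fhom_scomp:
  "x \<in> sobj (Fo c) \<Longrightarrow> y \<in> sobj (Fo c) \<Longrightarrow> z \<in> sobj (Fo c) \<Longrightarrow>
     f \<in> ssimp (shom (Fo c) x y) n \<Longrightarrow> g \<in> ssimp (shom (Fo c) y z) n \<Longrightarrow>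
     Fhom \<phi> n x z (scomp (Fo c) x y z n f g)
       = scomp (Fo d) (Fob \<phi> x) (Fob \<phi> y) (Fob \<phi> z) n (Fhom \<phi> n x y f) (Fhom \<phi> n y z g)"
  using sfunctor_Fob_Fhom unfolding sfunctor_def by simp

lemma Fhom_sid: "x \<in> sobj (Fo c) \<Longrightarrow> Fhom \<phi> 0 x x (sid (Fo c) x) = sid (Fo d) (Fob \<phi> x)"
  using sfunctor_Fob_Fhom unfolding sfunctor_def by simp

context
  fixes e \<psi> assumes e: "e \<in> cat_ob D" and \<psi>: "\<psi> \<in> cat_hom D d e"
begin

lemma Fob_comp: "x \<in> sobj (Fo c) \<Longrightarrow> Fob (cat_comp D c d e \<phi> \<psi>) x = Fob \<psi> (Fob \<phi> x)"
  using scat_functor c d e \<phi> \<psi> unfolding scat_functor_def by simp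

lemma Fhom_comp:
  "x \<in> sobj (Fo c) \<Longrightarrow> y \<in> sobj (Fo c) \<Longrightarrow> f \<in> ssimp (shom (Fo c) x y) n \<Longrightarrow>
     Fhom (cat_comp D c d e \<phi> \<psi>) n x y f = Fhom \<psi> n (Fob \<phi> x) (Fob \<phi> y) (Fhom \<phi> n x y f)"
  using scat_functor c d e \<phi> \<psi> unfolding scat_functor_def by simp

end

end

lemma hc_nerve_map_id:
  assumes c: "c \<in> cat_ob D" and z: "z \<in> hc_simp (Fo c) n"
  shows "fm (cat_id D c) n z = z"
proof (rule prod_eqI)
  show "fst (fm (cat_id D c) n z) = fst z"
    using Fob_id[OF c hc_simp_ob[OF z]] hc_simp_ob_undef[OF z]
    by (auto simp: hc_nerve_map_def case_prod_unfold)
  show "snd (fm (cat_id D c) n z) = snd z"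
    using Fhom_id[OF c hc_simp_ob[OF z] hc_simp_ob[OF z] hc_simp_hom[OF z]] hc_simp_hom_undef[OF z]
    by (auto simp: hc_nerve_map_def case_prod_unfold fun_eq_iff)
qed

context
  fixes n d dm assumes chain: "chain_functor D n d dm"
begin

lemmas chain_ob = chain_functor_ob[OF chain]
lemmas chain_mor = chain_functor_hom[OF chain]

lemma transport_ob_in:
  "a \<le> b \<Longrightarrow> b \<le> n \<Longrightarrow> X \<in> sobj (Fo (d a)) \<Longrightarrow> Fob (dm a b) X \<in> sobj (Fo (d b))"
  using Fob_in[OF chain_ob chain_ob chain_mor] by simp

lemma transport_hom_in:
  "a \<le> b \<Longrightarrow> b \<le> n \<Longrightarrow> X \<in> sobj (Fo (d a)) \<Longrightarrow> Y \<in> sobj (Fo (d a)) \<Longrightarrow>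
     f \<in> ssimp (shom (Fo (d a)) X Y) k \<Longrightarrow>
     Fhom (dm a b) k X Y f \<in> ssimp (shom (Fo (d b)) (Fob (dm a b) X) (Fob (dm a b) Y)) k"
  using Fhom_in[OF chain_ob chain_ob chain_mor] by simp

lemma transport_ob_comp:
  assumes "a \<le> b" "b \<le> c" "c \<le> n" "X \<in> sobj (Fo (d a))"
  shows "Fob (dm b c) (Fob (dm a b) X) = Fob (dm a c) X"
proof -
  have "Fob (dm a c) X = Fob (cat_comp D (d a) (d b) (d c) (dm a b) (dm b c)) X"
    using chain_functor_comp[OF chain assms(1-3)] by simp
  also have "\<dots> = Fob (dm b c) (Fob (dm a b) X)"
    using assms by (intro Fob_comp chain_ob chain_mor) auto
  finally show ?thesis by simp
qed

lemma transport_hom_comp: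
  assumes "a \<le> b" "b \<le> c" "c \<le> n" "X \<in> sobj (Fo (d a))" "Y \<in> sobj (Fo (d a))"
    and "f \<in> ssimp (shom (Fo (d a)) X Y) k"
  shows "Fhom (dm b c) k (Fob (dm a b) X) (Fob (dm a b) Y) (Fhom (dm a b) k X Y f) = Fhom (dm a c) k X Y f"
proof -
  have "Fhom (dm a c) k X Y f = Fhom (cat_comp D (d a) (d b) (d c) (dm a b) (dm b c)) k X Y f"
    using chain_functor_comp[OF chain assms(1-3)] by simp
  also have "\<dots> = Fhom (dm b c) k (Fob (dm a b) X) (Fob (dm a b) Y) (Fhom (dm a b) k X Y f)"
    using assms by (intro Fhom_comp chain_ob chain_mor) auto
  finally show ?thesis by simp
qed

lemma transport_ob_id: "a \<le> n \<Longrightarrow> X \<in> sobj (Fo (d a)) \<Longrightarrow> Fob (dm a a) X = X"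
  using Fob_id[OF chain_ob] chain_functor_id[OF chain] by simp

lemma transport_hom_id:
  "a \<le> n \<Longrightarrow> X \<in> sobj (Fo (d a)) \<Longrightarrow> Y \<in> sobj (Fo (d a)) \<Longrightarrow>
     f \<in> ssimp (shom (Fo (d a)) X Y) k \<Longrightarrow> Fhom (dm a a) k X Y f = f"
  using Fhom_id[OF chain_ob] chain_functor_id[OF chain] by simp

lemma transport_hom_sact:
  "a \<le> b \<Longrightarrow> b \<le> n \<Longrightarrow> X \<in> sobj (Fo (d a)) \<Longrightarrow> Y \<in> sobj (Fo (d a)) \<Longrightarrow>
     f \<in> ssimp (shom (Fo (d a)) X Y) k \<Longrightarrow> mono_map k' k \<beta> \<Longrightarrow>
     Fhom (dm a b) k' X Y (sact (shom (Fo (d a)) X Y) k' k \<beta> f)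
       = sact (shom (Fo (d b)) (Fob (dm a b) X) (Fob (dm a b) Y)) k' k \<beta> (Fhom (dm a b) k X Y f)"
  using Fhom_sact[OF chain_ob chain_ob chain_mor] by simp

lemma transport_hom_scomp:
  "a \<le> b \<Longrightarrow> b \<le> n \<Longrightarrow> X \<in> sobj (Fo (d a)) \<Longrightarrow> Y \<in> sobj (Fo (d a)) \<Longrightarrow> W \<in> sobj (Fo (d a)) \<Longrightarrow>
     f \<in> ssimp (shom (Fo (d a)) X Y) k \<Longrightarrow> g \<in> ssimp (shom (Fo (d a)) Y W) k \<Longrightarrow>
     Fhom (dm a b) k X W (scomp (Fo (d a)) X Y W k f g)
       = scomp (Fo (d b)) (Fob (dm a b) X) (Fob (dm a b) Y) (Fob (dm a b) W) k
           (Fhom (dm a b) k X Y f) (Fhom (dm a b) k Y W g)"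
  using Fhom_scomp[OF chain_ob chain_ob chain_mor] by simp

lemma transport_hom_sid:
  "a \<le> b \<Longrightarrow> b \<le> n \<Longrightarrow> X \<in> sobj (Fo (d a)) \<Longrightarrow>
     Fhom (dm a b) 0 X X (sid (Fo (d a)) X) = sid (Fo (d b)) (Fob (dm a b) X)"
  using Fhom_sid[OF chain_ob chain_ob chain_mor] by simp

end

end

section \<open>The base functor of a simplex of N(Gr F)\<close>

definition gr_mor :: "nat \<Rightarrow> ('o \<times> 'c, 'm \<times> 'd) hc_simplex \<Rightarrow> nat \<Rightarrow> nat \<Rightarrow> 'd" where
  "gr_mor n z i j =
     (if i \<le> j \<and> j \<le> n then snd (snd z i j 0 (\<lambda>l. if l = 0 then {i, j} else {})) else undefined)"

lemma gr_mor_undef: "\<not> (i \<le> j \<and> j \<le> n) \<Longrightarrow> gr_mor n z i j = undefined"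
  by (auto simp: gr_mor_def)

lemma gr_proj_eq: "gr_proj n z = ((\<lambda>i. if i \<le> n then snd (fst z i) else undefined), gr_mor n z)"
  by (simp add: gr_proj_def gr_mor_def case_prod_unfold fun_eq_iff)

context scat_diagram
begin

context
  fixes n z assumes z: "z \<in> hc_simp G n"
begin

lemma gr_simplex_base_ob: "i \<le> n \<Longrightarrow> snd (fst z i) \<in> cat_ob D"
  using hc_simp_ob[OF z] unfolding gr_scat_sobj_iff by blast

lemma gr_simplex_fibre_ob: "i \<le> n \<Longrightarrow> fst (fst z i) \<in> sobj (Fo (snd (fst z i)))"
  using hc_simp_ob[OF z] unfolding gr_scat_sobj_iff by blast

lemma gr_simplex_hom:
  "i \<le> j \<Longrightarrow> j \<le> n \<Longrightarrow> valid_chain i j k S \<Longrightarrow>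
     snd (snd z i j k S) \<in> cat_hom D (snd (fst z i)) (snd (fst z j)) \<and>
     fst (snd z i j k S) \<in> ssimp (shom (Fo (snd (fst z j)))
       (Fob (snd (snd z i j k S)) (fst (fst z i))) (fst (fst z j))) k"
  using hc_simp_hom[OF z, of i j k S] unfolding gr_scat_ssimp_iff by simp

lemma gr_simplex_sact:
  "i \<le> j \<Longrightarrow> j \<le> n \<Longrightarrow> valid_chain i j k S \<Longrightarrow> mono_map k' k \<beta> \<Longrightarrow>
     snd z i j k' (\<lambda>l. if l \<le> k' then S (\<beta> l) else {}) =
     (sact (shom (Fo (snd (fst z j))) (Fob (snd (snd z i j k S)) (fst (fst z i))) (fst (fst z j)))
        k' k \<beta> (fst (snd z i j k S)),
      snd (snd z i j k S))"
  using hc_simp_sact[OF z, of i j k S k' \<beta>] unfolding gr_scat_sact by simp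

text \<open>The simplicial action of Gr F keeps the D-component, and in N(P_ij) every vertex A
  is joined to the vertex {i..j} by the edge A <= {i..j}; so the D-component of
  sigma_ij is the same on all chains.\<close>

lemma gr_simplex_mor_const:
  assumes ij: "i \<le> j" "j \<le> n" and S: "valid_chain i j k S"
  shows "snd (snd z i j k S) = gr_mor n z i j"
proof -
  let ?V = "\<lambda>A. (\<lambda>l::nat. if l = 0 then A else {})"
  have edge: "snd (snd z i j 0 (?V A)) = snd (snd z i j 0 (?V {i..j}))"
    if A: "i \<in> A" "j \<in> A" "A \<subseteq> {i..j}" for A
  proof -
    let ?E = "\<lambda>l::nat. if l = 0 then A else if l = 1 then {i..j} else {}"
    have E: "valid_chain i j 1 ?E" using A ij unfolding valid_chain_def by auto
    have e0: "(\<lambda>l. if l \<le> 0 then ?E ((\<lambda>_. 0) l) else {}) = ?V A" by auto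
    have e1: "(\<lambda>l. if l \<le> 0 then ?E ((\<lambda>_. 1) l) else {}) = ?V {i..j}" by auto
    have "snd (snd z i j 0 (?V A)) = snd (snd z i j 1 ?E)"
      using gr_simplex_sact[OF ij E mono_map_const[of 0 1 0]] unfolding e0 by simp
    also have "\<dots> = snd (snd z i j 0 (?V {i..j}))"
      using gr_simplex_sact[OF ij E mono_map_const[of 1 1 0]] unfolding e1 by simp
    finally show ?thesis .
  qed
  have S0: "i \<in> S 0" "j \<in> S 0" "S 0 \<subseteq> {i..j}" using S unfolding valid_chain_def by auto
  have e: "(\<lambda>l. if l \<le> 0 then S ((\<lambda>_. 0) l) else {}) = ?V (S 0)" by auto
  have "snd (snd z i j k S) = snd (snd z i j 0 (?V (S 0)))"
    using gr_simplex_sact[OF ij S mono_map_const[of 0 k 0]] unfolding e by simp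
  also have "\<dots> = snd (snd z i j 0 (?V {i..j}))" using edge[OF S0] .
  also have "\<dots> = snd (snd z i j 0 (?V {i, j}))" using edge[of "{i, j}"] ij by simp
  finally show ?thesis using ij by (simp add: gr_mor_def)
qed

lemma gr_mor_in_hom: "i \<le> j \<Longrightarrow> j \<le> n \<Longrightarrow> gr_mor n z i j \<in> cat_hom D (snd (fst z i)) (snd (fst z j))"
  using gr_simplex_hom[of i j 0 "\<lambda>l. if l = 0 then {i, j} else {}"]
  by (simp add: gr_mor_def valid_chain_vertex_iff)

lemma gr_simplex_fibre_hom:
  "i \<le> j \<Longrightarrow> j \<le> n \<Longrightarrow> valid_chain i j k S \<Longrightarrow>
     fst (snd z i j k S)
       \<in> ssimp (shom (Fo (snd (fst z j))) (Fob (gr_mor n z i j) (fst (fst z i))) (fst (fst z j))) k"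
  using gr_simplex_hom[of i j k S] gr_simplex_mor_const[of i j k S] by simp

lemma gr_simplex_fibre_sact:
  "i \<le> j \<Longrightarrow> j \<le> n \<Longrightarrow> valid_chain i j k S \<Longrightarrow> mono_map k' k \<beta> \<Longrightarrow>
     fst (snd z i j k' (\<lambda>l. if l \<le> k' then S (\<beta> l) else {})) =
     sact (shom (Fo (snd (fst z j))) (Fob (gr_mor n z i j) (fst (fst z i))) (fst (fst z j)))
       k' k \<beta> (fst (snd z i j k S))"
  using gr_simplex_sact[of i j k S k' \<beta>] gr_simplex_mor_const[of i j k S] by simp

lemma gr_mor_id: "i \<le> n \<Longrightarrow> gr_mor n z i i = cat_id D (snd (fst z i))"
proof -
  assume i: "i \<le> n"
  have e: "(\<lambda>p. if p \<le> 0 then {i} else {}) = (\<lambda>l::nat. if l = 0 then {i, i} else {})"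
    by (simp add: fun_eq_iff)
  show ?thesis
    using hc_simp_id[OF z i, of 0] i unfolding e by (simp add: gr_scat_degen0 gr_scat_sid gr_mor_def)
qed

lemma gr_simplex_fibre_id:
  "i \<le> n \<Longrightarrow> fst (snd z i i k (\<lambda>p. if p \<le> k then {i} else {})) =
     degen0 (shom (Fo (snd (fst z i))) (fst (fst z i)) (fst (fst z i))) k
       (sid (Fo (snd (fst z i))) (fst (fst z i)))"
  using hc_simp_id[OF z, of i k] gr_simplex_base_ob[of i] gr_simplex_fibre_ob[of i]
  by (simp add: gr_scat_degen0 gr_scat_sid Fob_id)

lemma gr_simplex_comp:
  assumes "i \<le> j" "j \<le> l" "l \<le> n" "valid_chain i j k S" "valid_chain j l k T"
  shows "snd z i l k (\<lambda>p. S p \<union> T p) =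
    (scomp (Fo (snd (fst z l))) (Fob (gr_mor n z j l) (Fob (gr_mor n z i j) (fst (fst z i))))
        (Fob (gr_mor n z j l) (fst (fst z j))) (fst (fst z l)) k
        (Fhom (gr_mor n z j l) k (Fob (gr_mor n z i j) (fst (fst z i))) (fst (fst z j))
          (fst (snd z i j k S)))
        (fst (snd z j l k T)),
     cat_comp D (snd (fst z i)) (snd (fst z j)) (snd (fst z l)) (gr_mor n z i j) (gr_mor n z j l))"
  using hc_simp_comp[OF z assms, symmetric] gr_simplex_mor_const[of i j k S]
    gr_simplex_mor_const[of j l k T] assms
  by (simp add: gr_scat_scomp)

lemma gr_mor_comp:
  assumes "i \<le> j" "j \<le> l" "l \<le> n"
  shows "gr_mor n z i l =
    cat_comp D (snd (fst z i)) (snd (fst z j)) (snd (fst z l)) (gr_mor n z i j) (gr_mor n z j l)"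
proof -
  let ?S = "\<lambda>p::nat. if p = 0 then {i, j} else {}"
  let ?T = "\<lambda>p::nat. if p = 0 then {j, l} else {}"
  have S: "valid_chain i j 0 ?S" and T: "valid_chain j l 0 ?T"
    using assms by (auto simp: valid_chain_vertex_iff)
  show ?thesis
    using gr_simplex_comp[OF assms S T] gr_simplex_mor_const[OF _ assms(3) valid_chain_union[OF S T]] assms
    by simp
qed

lemma gr_chain_functor: "chain_functor D n (\<lambda>i. snd (fst z i)) (gr_mor n z)"
  unfolding chain_functor_def
proof (intro conjI allI impI)
  show "snd (fst z i) \<in> cat_ob D" if "i \<le> n" for i
    using that by (rule gr_simplex_base_ob)
  show "gr_mor n z i j \<in> cat_hom D (snd (fst z i)) (snd (fst z j))" if "i \<le> j" "j \<le> n" for i j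
    using that by (rule gr_mor_in_hom)
  show "gr_mor n z i i = cat_id D (snd (fst z i))" if "i \<le> n" for i
    using that by (rule gr_mor_id)
  show "gr_mor n z i l = cat_comp D (snd (fst z i)) (snd (fst z j)) (snd (fst z l))
      (gr_mor n z i j) (gr_mor n z j l)" if "i \<le> j" "j \<le> l" "l \<le> n" for i j l
    using that by (rule gr_mor_comp)
qed

lemma gr_proj_in_ord_simp: "gr_proj n z \<in> ord_simp D n"
proof -
  have "chain_functor D n (\<lambda>i. if i \<le> n then snd (fst z i) else undefined) (gr_mor n z)"
    using gr_chain_functor by (subst chain_functor_cong[where d' = "\<lambda>i. snd (fst z i)"]) simp_all
  then show ?thesis unfolding gr_proj_eq ord_simp_iff by (simp add: gr_mor_def)
qed

lemmas gr_transport_ob_in = transport_ob_in[OF gr_chain_functor]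
lemmas gr_transport_hom_in = transport_hom_in[OF gr_chain_functor]
lemmas gr_transport_ob_comp = transport_ob_comp[OF gr_chain_functor]
lemmas gr_transport_hom_comp = transport_hom_comp[OF gr_chain_functor]
lemmas gr_transport_ob_id = transport_ob_id[OF gr_chain_functor]
lemmas gr_transport_hom_id = transport_hom_id[OF gr_chain_functor]
lemmas gr_transport_hom_sact = transport_hom_sact[OF gr_chain_functor]
lemmas gr_transport_hom_scomp = transport_hom_scomp[OF gr_chain_functor]
lemmas gr_transport_hom_sid = transport_hom_sid[OF gr_chain_functor]

end

end

section \<open>From simplices of N(Gr F) to simplices of the relative nerve\<close>

context scat_diagram
begin

text \<open>The simplex beta^* z of N(Gr F), moved into the fibre N(F c_t) along the morphisms
  d_(beta p, t) of the base functor of z.\<close>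

definition gr_push :: "nat \<Rightarrow> ('o \<times> 'c, 'm \<times> 'd) hc_simplex \<Rightarrow> nat \<Rightarrow> nat \<Rightarrow> (nat \<Rightarrow> nat)
    \<Rightarrow> ('o, 'm) hc_simplex" where
  "gr_push n z t m \<beta> =
     ((\<lambda>p. if p \<le> m then Fob (gr_mor n z (\<beta> p) t) (fst (fst z (\<beta> p))) else undefined),
      (\<lambda>p q k T. if p \<le> q \<and> q \<le> m \<and> valid_chain p q k T
         then Fhom (gr_mor n z (\<beta> q) t) k (Fob (gr_mor n z (\<beta> p) (\<beta> q)) (fst (fst z (\<beta> p))))
                (fst (fst z (\<beta> q))) (fst (snd z (\<beta> p) (\<beta> q) k (\<lambda>l. \<beta> ` T l)))
         else undefined))"

definition gr_to_rel_maps :: "nat \<Rightarrow> ('o \<times> 'c, 'm \<times> 'd) hc_simplex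
    \<Rightarrow> nat set \<Rightarrow> nat \<Rightarrow> (nat \<Rightarrow> nat) \<Rightarrow> ('o, 'm) hc_simplex" where
  "gr_to_rel_maps n z J m \<beta> =
     (if J \<noteq> {} \<and> J \<subseteq> {0..n} \<and> \<beta> \<in> delta_simp J m then gr_push n z (Max J) m \<beta> else undefined)"

definition gr_to_rel :: "nat \<Rightarrow> ('o \<times> 'c, 'm \<times> 'd) hc_simplex \<Rightarrow> ('c, 'd, ('o, 'm) hc_simplex) rel_simplex" where
  "gr_to_rel n z = (fst (gr_proj n z), snd (gr_proj n z), gr_to_rel_maps n z)"

lemma gr_push_fst: "p \<le> m \<Longrightarrow> fst (gr_push n z t m \<beta>) p = Fob (gr_mor n z (\<beta> p) t) (fst (fst z (\<beta> p)))"
  by (simp add: gr_push_def)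

lemma gr_push_fst_undef: "\<not> p \<le> m \<Longrightarrow> fst (gr_push n z t m \<beta>) p = undefined"
  by (auto simp: gr_push_def)

lemma gr_push_snd:
  "p \<le> q \<Longrightarrow> q \<le> m \<Longrightarrow> valid_chain p q k T \<Longrightarrow> snd (gr_push n z t m \<beta>) p q k T =
     Fhom (gr_mor n z (\<beta> q) t) k (Fob (gr_mor n z (\<beta> p) (\<beta> q)) (fst (fst z (\<beta> p))))
       (fst (fst z (\<beta> q))) (fst (snd z (\<beta> p) (\<beta> q) k (\<lambda>l. \<beta> ` T l)))"
  by (simp add: gr_push_def)

lemma gr_push_snd_undef:
  "\<not> (p \<le> q \<and> q \<le> m \<and> valid_chain p q k T) \<Longrightarrow> snd (gr_push n z t m \<beta>) p q k T = undefined"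
  by (auto simp: gr_push_def)

context
  fixes n z assumes z: "z \<in> hc_simp G n"
begin

context
  fixes t m \<beta> assumes t: "t \<le> n" and \<beta>: "mono_map m t \<beta>"
begin

lemma gr_push_ob_factor:
  assumes "p \<le> q" "q \<le> m"
  shows "fst (gr_push n z t m \<beta>) p =
    Fob (gr_mor n z (\<beta> q) t) (Fob (gr_mor n z (\<beta> p) (\<beta> q)) (fst (fst z (\<beta> p))))"
  using assms gr_transport_ob_comp[OF z mono_map_mono[OF \<beta> assms] mono_map_le[OF \<beta> assms(2)] t
      gr_simplex_fibre_ob[OF z]] mono_map_le[OF \<beta>, of p] t
  by (simp add: gr_push_fst)

lemma gr_push_ob_in: "p \<le> m \<Longrightarrow> fst (gr_push n z t m \<beta>) p \<in> sobj (Fo (snd (fst z t)))"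
  using mono_map_le[OF \<beta>, of p] t
  by (auto simp: gr_push_fst intro!: gr_transport_ob_in[OF z] gr_simplex_fibre_ob[OF z])

lemma gr_push_fibre_hom:
  "p \<le> q \<Longrightarrow> q \<le> m \<Longrightarrow> valid_chain p q k T \<Longrightarrow>
     fst (snd z (\<beta> p) (\<beta> q) k (\<lambda>l. \<beta> ` T l)) \<in> ssimp (shom (Fo (snd (fst z (\<beta> q))))
       (Fob (gr_mor n z (\<beta> p) (\<beta> q)) (fst (fst z (\<beta> p)))) (fst (fst z (\<beta> q)))) k"
  using mono_map_mono[OF \<beta>, of p q] mono_map_le[OF \<beta>, of q] t
  by (intro gr_simplex_fibre_hom[OF z] valid_chain_mono_map_image[OF \<beta>]) auto

lemma gr_push_hom_in:
  assumes pq: "p \<le> q" "q \<le> m" and T: "valid_chain p q k T"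
  shows "snd (gr_push n z t m \<beta>) p q k T \<in> ssimp (shom (Fo (snd (fst z t)))
    (fst (gr_push n z t m \<beta>) p) (fst (gr_push n z t m \<beta>) q)) k"
proof -
  have "\<beta> p \<le> \<beta> q" "\<beta> q \<le> t" "\<beta> q \<le> n" "\<beta> p \<le> n"
    using mono_map_mono[OF \<beta> pq] mono_map_le[OF \<beta> pq(2)] t by auto
  then show ?thesis
    unfolding gr_push_snd[OF pq T] gr_push_ob_factor[OF pq] gr_push_fst[OF pq(2)]
    by (intro gr_transport_hom_in[OF z] gr_transport_ob_in[OF z] gr_simplex_fibre_ob[OF z]
        gr_push_fibre_hom pq T t)
qed

lemma gr_push_sact:
  assumes pq: "p \<le> q" "q \<le> m" and T: "valid_chain p q k T" and \<gamma>: "mono_map k' k \<gamma>"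
  shows "sact (shom (Fo (snd (fst z t))) (fst (gr_push n z t m \<beta>) p) (fst (gr_push n z t m \<beta>) q))
      k' k \<gamma> (snd (gr_push n z t m \<beta>) p q k T)
    = snd (gr_push n z t m \<beta>) p q k' (\<lambda>l. if l \<le> k' then T (\<gamma> l) else {})"
proof -
  let ?\<phi> = "gr_mor n z (\<beta> q) t"
  let ?X = "Fob (gr_mor n z (\<beta> p) (\<beta> q)) (fst (fst z (\<beta> p)))"
  let ?Y = "fst (fst z (\<beta> q))"
  let ?\<tau> = "fst (snd z (\<beta> p) (\<beta> q) k (\<lambda>l. \<beta> ` T l))"
  have b: "\<beta> p \<le> \<beta> q" "\<beta> q \<le> t" "\<beta> q \<le> n" "\<beta> p \<le> n"
    using mono_map_mono[OF \<beta> pq] mono_map_le[OF \<beta> pq(2)] t by auto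
  have img: "(\<lambda>l. \<beta> ` (if l \<le> k' then T (\<gamma> l) else {})) =
      (\<lambda>l. if l \<le> k' then (\<lambda>l. \<beta> ` T l) (\<gamma> l) else {})"
    by (simp add: fun_eq_iff)
  have "snd (gr_push n z t m \<beta>) p q k' (\<lambda>l. if l \<le> k' then T (\<gamma> l) else {}) =
      Fhom ?\<phi> k' ?X ?Y (fst (snd z (\<beta> p) (\<beta> q) k' (\<lambda>l. if l \<le> k' then (\<lambda>l. \<beta> ` T l) (\<gamma> l) else {})))"
    using gr_push_snd[OF pq valid_chain_reindex[OF T \<gamma>]] img by simp
  also have "\<dots> = Fhom ?\<phi> k' ?X ?Y (sact (shom (Fo (snd (fst z (\<beta> q)))) ?X ?Y) k' k \<gamma> ?\<tau>)"
    using gr_simplex_fibre_sact[OF z b(1,3) valid_chain_mono_map_image[OF \<beta> pq(2) T] \<gamma>] by simp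
  also have "\<dots> = sact (shom (Fo (snd (fst z t))) (Fob ?\<phi> ?X) (Fob ?\<phi> ?Y)) k' k \<gamma> (Fhom ?\<phi> k ?X ?Y ?\<tau>)"
    using b by (intro gr_transport_hom_sact[OF z] gr_transport_ob_in[OF z] gr_simplex_fibre_ob[OF z]
        gr_push_fibre_hom pq T t \<gamma>)
  finally show ?thesis
    by (simp add: gr_push_ob_factor[OF pq] gr_push_fst[OF pq(2)] gr_push_snd[OF pq T])
qed

lemma gr_push_comp:
  assumes pqr: "p \<le> q" "q \<le> r" "r \<le> m" and T: "valid_chain p q k T" and T': "valid_chain q r k T'"
  shows "scomp (Fo (snd (fst z t))) (fst (gr_push n z t m \<beta>) p) (fst (gr_push n z t m \<beta>) q)
      (fst (gr_push n z t m \<beta>) r) k (snd (gr_push n z t m \<beta>) p q k T) (snd (gr_push n z t m \<beta>) q r k T')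
    = snd (gr_push n z t m \<beta>) p r k (\<lambda>l. T l \<union> T' l)"
proof -
  let ?a = "\<beta> p" and ?b = "\<beta> q" and ?c = "\<beta> r"
  let ?\<phi> = "gr_mor n z ?c t" and ?\<psi> = "gr_mor n z ?b ?c"
  let ?X = "Fob (gr_mor n z ?a ?b) (fst (fst z ?a))"
  let ?Y = "fst (fst z ?b)" and ?Z = "fst (fst z ?c)"
  let ?\<sigma> = "fst (snd z ?a ?b k (\<lambda>l. \<beta> ` T l))" and ?\<tau> = "fst (snd z ?b ?c k (\<lambda>l. \<beta> ` T' l))"
  have qm: "q \<le> m" and pr: "p \<le> r" using pqr by auto
  have b: "?a \<le> ?b" "?b \<le> ?c" "?c \<le> t" "?a \<le> n" "?b \<le> n" "?c \<le> n"
    using mono_map_mono[OF \<beta>] mono_map_le[OF \<beta>] t pqr by (meson order_trans)+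
  have X: "?X \<in> sobj (Fo (snd (fst z ?b)))"
    using b by (intro gr_transport_ob_in[OF z] gr_simplex_fibre_ob[OF z])
  have \<sigma>: "?\<sigma> \<in> ssimp (shom (Fo (snd (fst z ?b))) ?X ?Y) k" by (rule gr_push_fibre_hom[OF pqr(1) qm T])
  have \<tau>: "?\<tau> \<in> ssimp (shom (Fo (snd (fst z ?c))) (Fob ?\<psi> ?Y) ?Z) k" by (rule gr_push_fibre_hom[OF pqr(2,3) T'])
  have "snd (gr_push n z t m \<beta>) p r k (\<lambda>l. T l \<union> T' l)
      = Fhom ?\<phi> k (Fob ?\<psi> ?X) ?Z (fst (snd z ?a ?c k (\<lambda>l. \<beta> ` T l \<union> \<beta> ` T' l)))"
    using gr_push_snd[OF pr pqr(3) valid_chain_union[OF T T']] b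
      gr_transport_ob_comp[OF z b(1,2,6) gr_simplex_fibre_ob[OF z b(4)]]
    by (simp add: image_Un)
  also have "\<dots> = Fhom ?\<phi> k (Fob ?\<psi> ?X) ?Z (scomp (Fo (snd (fst z ?c))) (Fob ?\<psi> ?X) (Fob ?\<psi> ?Y) ?Z k
      (Fhom ?\<psi> k ?X ?Y ?\<sigma>) ?\<tau>)"
    using gr_simplex_comp[OF z b(1,2,6) valid_chain_mono_map_image[OF \<beta> qm T]
        valid_chain_mono_map_image[OF \<beta> pqr(3) T']] by simp
  also have "\<dots> = scomp (Fo (snd (fst z t))) (Fob ?\<phi> (Fob ?\<psi> ?X)) (Fob ?\<phi> (Fob ?\<psi> ?Y)) (Fob ?\<phi> ?Z) k
      (Fhom ?\<phi> k (Fob ?\<psi> ?X) (Fob ?\<psi> ?Y) (Fhom ?\<psi> k ?X ?Y ?\<sigma>)) (Fhom ?\<phi> k (Fob ?\<psi> ?Y) ?Z ?\<tau>)"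
    using b X \<sigma> \<tau> t
    by (intro gr_transport_hom_scomp[OF z] gr_transport_ob_in[OF z] gr_transport_hom_in[OF z]
        gr_simplex_fibre_ob[OF z]) auto
  also have "\<dots> = scomp (Fo (snd (fst z t))) (fst (gr_push n z t m \<beta>) p) (fst (gr_push n z t m \<beta>) q)
      (fst (gr_push n z t m \<beta>) r) k (snd (gr_push n z t m \<beta>) p q k T) (snd (gr_push n z t m \<beta>) q r k T')"
    using gr_transport_ob_comp[OF z b(2,3) t X] gr_push_ob_factor[OF pqr(1) qm]
      gr_transport_ob_comp[OF z b(2,3) t gr_simplex_fibre_ob[OF z b(5)]] gr_push_fst[OF qm]
      gr_push_fst[OF pqr(3)] gr_transport_hom_comp[OF z b(2,3) t X gr_simplex_fibre_ob[OF z b(5)] \<sigma>]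
      gr_push_snd[OF pqr(1) qm T] gr_push_snd[OF pqr(2,3) T']
    by simp
  finally show ?thesis by simp
qed

lemma gr_push_id:
  assumes p: "p \<le> m"
  shows "snd (gr_push n z t m \<beta>) p p k (\<lambda>l. if l \<le> k then {p} else {}) =
    degen0 (shom (Fo (snd (fst z t))) (fst (gr_push n z t m \<beta>) p) (fst (gr_push n z t m \<beta>) p)) k
      (sid (Fo (snd (fst z t))) (fst (gr_push n z t m \<beta>) p))"
proof -
  let ?a = "\<beta> p"
  let ?\<phi> = "gr_mor n z ?a t"
  let ?c = "snd (fst z ?a)" and ?A = "fst (fst z ?a)"
  have a: "?a \<le> t" "?a \<le> n" using mono_map_le[OF \<beta> p] t by auto
  have A: "?A \<in> sobj (Fo ?c)" by (rule gr_simplex_fibre_ob[OF z a(2)])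
  have img: "(\<lambda>l. \<beta> ` (if l \<le> k then {p} else {})) = (\<lambda>l. if l \<le> k then {?a} else {})"
    by (simp add: fun_eq_iff)
  have "snd (gr_push n z t m \<beta>) p p k (\<lambda>l. if l \<le> k then {p} else {})
      = Fhom ?\<phi> k ?A ?A (degen0 (shom (Fo ?c) ?A ?A) k (sid (Fo ?c) ?A))"
    using gr_push_snd[OF order_refl p valid_chain_const] img gr_transport_ob_id[OF z a(2) A]
      gr_simplex_fibre_id[OF z a(2)] by simp
  also have "\<dots> = sact (shom (Fo (snd (fst z t))) (Fob ?\<phi> ?A) (Fob ?\<phi> ?A)) k 0 (\<lambda>_. 0)
      (Fhom ?\<phi> 0 ?A ?A (sid (Fo ?c) ?A))"
    unfolding degen0_def
    using t by (intro gr_transport_hom_sact[OF z] a A Fo_sid_in gr_simplex_base_ob[OF z] mono_map_const) auto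
  also have "\<dots> = degen0 (shom (Fo (snd (fst z t))) (fst (gr_push n z t m \<beta>) p)
      (fst (gr_push n z t m \<beta>) p)) k (sid (Fo (snd (fst z t))) (fst (gr_push n z t m \<beta>) p))"
    unfolding degen0_def gr_transport_hom_sid[OF z a(1) t A] gr_push_fst[OF p] ..
  finally show ?thesis .
qed

lemma gr_push_in_hc_simp: "gr_push n z t m \<beta> \<in> hc_simp (Fo (snd (fst z t))) m"
proof (rule hc_simpI)
  show "snd (gr_push n z t m \<beta>) i j k S = undefined" if "\<not> (i \<le> j \<and> j \<le> m \<and> valid_chain i j k S)"
    for i j k S
    using that by (rule gr_push_snd_undef)
qed (auto simp: gr_push_fst_undef intro: gr_push_ob_in gr_push_hom_in gr_push_sact gr_push_comp gr_push_id)

end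

end

end

context scat_diagram
begin

lemma gr_push_natural:
  assumes \<alpha>: "mono_map m' m \<alpha>"
  shows "gr_push n z t m' (\<lambda>p. if p \<le> m' then \<beta> (\<alpha> p) else 0) = hc_act m' m \<alpha> (gr_push n z t m \<beta>)"
    (is "gr_push n z t m' ?\<beta>' = _")
proof (rule prod_eqI; intro ext)
  fix p
  show "fst (gr_push n z t m' ?\<beta>') p = fst (hc_act m' m \<alpha> (gr_push n z t m \<beta>)) p"
    using mono_map_le[OF \<alpha>, of p]
    by (cases "p \<le> m'") (simp_all add: gr_push_fst gr_push_fst_undef hc_act_fst hc_act_fst_undef)
next
  fix p q k T
  show "snd (gr_push n z t m' ?\<beta>') p q k T = snd (hc_act m' m \<alpha> (gr_push n z t m \<beta>)) p q k T"
  proof (cases "p \<le> q \<and> q \<le> m' \<and> valid_chain p q k T")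
    case True
    then have pq: "p \<le> q" "q \<le> m'" and T: "valid_chain p q k T" by auto
    have "(\<lambda>l. ?\<beta>' ` T l) = (\<lambda>l. \<beta> ` \<alpha> ` T l)"
      using valid_chain_image_cong[OF T, of ?\<beta>' "\<lambda>p. \<beta> (\<alpha> p)"] pq by (simp add: image_image)
    then show ?thesis
      using pq T mono_map_mono[OF \<alpha> pq] mono_map_le[OF \<alpha> pq(2)]
      by (simp add: gr_push_snd hc_act_snd valid_chain_mono_map_image[OF \<alpha>])
  qed (simp add: gr_push_snd_undef hc_act_snd_undef)
qed

lemma gr_mor_hc_act:
  assumes "i \<le> j" "j \<le> m" and \<alpha>: "mono_map m n \<alpha>"
  shows "gr_mor m (hc_act m n \<alpha> z) i j = gr_mor n z (\<alpha> i) (\<alpha> j)"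
proof -
  have e: "(\<lambda>l. \<alpha> ` (if l = 0 then {i, j} else {})) = (\<lambda>l. if l = 0 then {\<alpha> i, \<alpha> j} else {})"
    by (simp add: fun_eq_iff)
  have "gr_mor m (hc_act m n \<alpha> z) i j = snd (snd z (\<alpha> i) (\<alpha> j) 0 (\<lambda>l. \<alpha> ` (if l = 0 then {i, j} else {})))"
    using assms by (simp add: gr_mor_def hc_act_snd valid_chain_vertex_iff)
  also have "\<dots> = gr_mor n z (\<alpha> i) (\<alpha> j)"
    unfolding e using assms mono_map_mono[OF \<alpha>] mono_map_le[OF \<alpha>] by (simp add: gr_mor_def)
  finally show ?thesis .
qed

lemma gr_proj_hc_act:
  assumes \<alpha>: "mono_map m n \<alpha>"
  shows "gr_proj m (hc_act m n \<alpha> z) =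
    ((\<lambda>i. if i \<le> m then fst (gr_proj n z) (\<alpha> i) else undefined),
     (\<lambda>i j. if i \<le> j \<and> j \<le> m then snd (gr_proj n z) (\<alpha> i) (\<alpha> j) else undefined))"
  using mono_map_le[OF \<alpha>]
  by (auto simp: gr_proj_eq fun_eq_iff hc_act_fst gr_mor_hc_act[OF _ _ \<alpha>] gr_mor_undef)

lemma gr_push_hc_act:
  assumes \<alpha>: "mono_map m n \<alpha>" and t: "t \<le> m" and \<beta>: "mono_map k t \<beta>"
  shows "gr_push m (hc_act m n \<alpha> z) t k \<beta> = gr_push n z (\<alpha> t) k (\<lambda>p. if p \<le> k then \<alpha> (\<beta> p) else 0)"
    (is "_ = gr_push n z (\<alpha> t) k ?\<gamma>")
proof (rule prod_eqI; intro ext)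
  fix p
  show "fst (gr_push m (hc_act m n \<alpha> z) t k \<beta>) p = fst (gr_push n z (\<alpha> t) k ?\<gamma>) p"
    using mono_map_le[OF \<beta>, of p] t
    by (cases "p \<le> k") (simp_all add: gr_push_fst gr_push_fst_undef hc_act_fst gr_mor_hc_act[OF _ _ \<alpha>])
next
  fix p q l T
  show "snd (gr_push m (hc_act m n \<alpha> z) t k \<beta>) p q l T = snd (gr_push n z (\<alpha> t) k ?\<gamma>) p q l T"
  proof (cases "p \<le> q \<and> q \<le> k \<and> valid_chain p q l T")
    case True
    then have pq: "p \<le> q" "q \<le> k" and T: "valid_chain p q l T" by auto
    have b: "\<beta> p \<le> \<beta> q" "\<beta> q \<le> t" using mono_map_mono[OF \<beta> pq] mono_map_le[OF \<beta> pq(2)] by auto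
    have "(\<lambda>l. ?\<gamma> ` T l) = (\<lambda>l. \<alpha> ` \<beta> ` T l)"
      using valid_chain_image_cong[OF T, of ?\<gamma> "\<lambda>p. \<alpha> (\<beta> p)"] pq by (simp add: image_image)
    then show ?thesis
      using pq T b t valid_chain_mono_map_image[OF \<beta> pq(2) T]
      by (simp add: gr_push_snd hc_act_snd hc_act_fst gr_mor_hc_act[OF _ _ \<alpha>])
  qed (simp add: gr_push_snd_undef)
qed

context
  fixes n z assumes z: "z \<in> hc_simp G n"
begin

lemma gr_push_compat:
  assumes it: "i \<le> t" "t \<le> n" and \<beta>: "mono_map m i \<beta>"
  shows "fm (gr_mor n z i t) m (gr_push n z i m \<beta>) = gr_push n z t m \<beta>"
proof (rule prod_eqI; intro ext)
  fix p
  show "fst (fm (gr_mor n z i t) m (gr_push n z i m \<beta>)) p = fst (gr_push n z t m \<beta>) p"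
    using mono_map_le[OF \<beta>, of p] it gr_transport_ob_comp[OF z _ it gr_simplex_fibre_ob[OF z]]
    by (cases "p \<le> m") (simp_all add: hc_nerve_map_fst hc_nerve_map_fst_undef gr_push_fst gr_push_fst_undef)
next
  fix p q k T
  show "snd (fm (gr_mor n z i t) m (gr_push n z i m \<beta>)) p q k T = snd (gr_push n z t m \<beta>) p q k T"
  proof (cases "p \<le> q \<and> q \<le> m \<and> valid_chain p q k T")
    case True
    then have pq: "p \<le> q" "q \<le> m" and T: "valid_chain p q k T" by auto
    have b: "\<beta> p \<le> \<beta> q" "\<beta> q \<le> i" "\<beta> q \<le> n" "\<beta> p \<le> n"
      using mono_map_mono[OF \<beta> pq] mono_map_le[OF \<beta> pq(2)] it by auto
    have X: "Fob (gr_mor n z (\<beta> p) (\<beta> q)) (fst (fst z (\<beta> p))) \<in> sobj (Fo (snd (fst z (\<beta> q))))"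
      using b by (intro gr_transport_ob_in[OF z] gr_simplex_fibre_ob[OF z])
    show ?thesis
      using pq T gr_push_ob_factor[OF z _ \<beta> pq] it
        gr_transport_hom_comp[OF z b(2) it(1,2) X gr_simplex_fibre_ob[OF z b(3)] gr_push_fibre_hom[OF z _ \<beta> pq T]]
      by (simp add: hc_nerve_map_snd gr_push_snd gr_push_fst)
  qed (simp add: hc_nerve_map_snd_undef gr_push_snd_undef)
qed

lemma sset_map_gr_to_rel_maps:
  assumes J: "J \<noteq> {}" "J \<subseteq> {0..n}"
  shows "sset_map (delta J) (fo (snd (fst z (Max J)))) (gr_to_rel_maps n z J)"
  unfolding sset_map_def hc_nerve_simps delta_simps
proof (intro conjI allI impI)
  fix m \<beta> assume \<beta>: "\<beta> \<in> delta_simp J m"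
  have "J \<subseteq> {0..Max J}" using Max_bounded_ge[OF J(2)] by auto
  then have "gr_push n z (Max J) m \<beta> \<in> hc_simp (Fo (snd (fst z (Max J)))) m"
    using Max_bounded_in[OF J] by (intro gr_push_in_hc_simp[OF z] delta_simp_mono_map[OF \<beta>]) auto
  then show "gr_to_rel_maps n z J m \<beta> \<in> hc_simp (Fo (snd (fst z (Max J)))) m"
    using J \<beta> by (simp add: gr_to_rel_maps_def)
next
  fix m' m \<alpha> \<beta> assume \<alpha>: "mono_map m' m \<alpha>" and \<beta>: "\<beta> \<in> delta_simp J m"
  then show "gr_to_rel_maps n z J m' (\<lambda>p. if p \<le> m' then \<beta> (\<alpha> p) else 0)
      = hc_act m' m \<alpha> (gr_to_rel_maps n z J m \<beta>)"
    using J delta_simp_act[OF \<beta> \<alpha>] by (simp add: gr_to_rel_maps_def gr_push_natural)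
next
  fix m \<beta> assume "\<beta> \<notin> delta_simp J m"
  then show "gr_to_rel_maps n z J m \<beta> = undefined" by (simp add: gr_to_rel_maps_def)
qed

lemma gr_to_rel_in_rel_simp: "gr_to_rel n z \<in> rel_simp D fo fm n"
  unfolding gr_to_rel_def rel_simp_iff prod.collapse
proof (intro conjI allI impI)
  show "gr_proj n z \<in> ord_simp D n" by (rule gr_proj_in_ord_simp[OF z])
next
  fix J :: "nat set" assume J: "J \<noteq> {}" "J \<subseteq> {0..n}"
  then show "sset_map (delta J) (fo (fst (gr_proj n z) (Max J))) (gr_to_rel_maps n z J)"
    using sset_map_gr_to_rel_maps[OF J] Max_bounded_in[OF J] by (simp add: gr_proj_eq)
next
  fix J :: "nat set" assume "\<not> (J \<noteq> {} \<and> J \<subseteq> {0..n})"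
  then show "gr_to_rel_maps n z J = (\<lambda>m \<beta>. undefined)" by (intro ext) (auto simp: gr_to_rel_maps_def)
next
  fix I J m \<beta> assume I: "I \<noteq> {}" "I \<subseteq> J" and J: "J \<subseteq> {0..n}" and \<beta>: "\<beta> \<in> delta_simp I m"
  have IJ: "Max I \<le> Max J" "Max J \<le> n" "J \<noteq> {}" "I \<subseteq> {0..n}"
    using Max_mono[OF I(2,1) finite_subset_atLeastAtMost[OF J]] Max_bounded_in[of J n] I J by auto
  have "I \<subseteq> {0..Max I}" using Max_bounded_ge[OF IJ(4)] by auto
  then have "fm (gr_mor n z (Max I) (Max J)) m (gr_push n z (Max I) m \<beta>) = gr_push n z (Max J) m \<beta>"
    by (intro gr_push_compat[OF IJ(1,2)] delta_simp_mono_map[OF \<beta>])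
  moreover have "\<beta> \<in> delta_simp J m" using \<beta> I(2) unfolding delta_simp_def by auto
  ultimately show "fm (snd (gr_proj n z) (Max I) (Max J)) m (gr_to_rel_maps n z I m \<beta>) = gr_to_rel_maps n z J m \<beta>"
    using I J IJ \<beta> by (simp add: gr_to_rel_maps_def gr_proj_eq)
qed

end

lemma gr_to_rel_maps_hc_act:
  assumes \<alpha>: "mono_map m n \<alpha>"
  shows "gr_to_rel_maps m (hc_act m n \<alpha> z) = (\<lambda>J. if J \<noteq> {} \<and> J \<subseteq> {0..m}
      then (\<lambda>k \<beta>. if \<beta> \<in> delta_simp J k
             then gr_to_rel_maps n z (\<alpha> ` J) k (\<lambda>p. if p \<le> k then \<alpha> (\<beta> p) else 0)
             else undefined)
      else (\<lambda>k \<beta>. undefined))"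
proof (intro ext)
  fix J k \<beta>
  show "gr_to_rel_maps m (hc_act m n \<alpha> z) J k \<beta> = (if J \<noteq> {} \<and> J \<subseteq> {0..m}
      then (\<lambda>k \<beta>. if \<beta> \<in> delta_simp J k
             then gr_to_rel_maps n z (\<alpha> ` J) k (\<lambda>p. if p \<le> k then \<alpha> (\<beta> p) else 0)
             else undefined)
      else (\<lambda>k \<beta>. undefined)) k \<beta>"
  proof (cases "J \<noteq> {} \<and> J \<subseteq> {0..m} \<and> \<beta> \<in> delta_simp J k")
    case True
    then have J: "J \<noteq> {}" "J \<subseteq> {0..m}" and \<beta>: "\<beta> \<in> delta_simp J k" by auto
    have "(\<lambda>p. if p \<le> k then \<alpha> (\<beta> p) else 0) \<in> delta_simp (\<alpha> ` J) k"
      by (rule delta_simp_image[OF \<beta> J(2) \<alpha>])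
    moreover have "\<alpha> ` J \<subseteq> {0..n}" using J(2) mono_map_le[OF \<alpha>] by auto
    moreover have "gr_push m (hc_act m n \<alpha> z) (Max J) k \<beta>
        = gr_push n z (\<alpha> (Max J)) k (\<lambda>p. if p \<le> k then \<alpha> (\<beta> p) else 0)"
      using Max_bounded_in[OF J] Max_bounded_ge[OF J(2)]
      by (intro gr_push_hc_act[OF \<alpha>] delta_simp_mono_map[OF \<beta>]) auto
    ultimately show ?thesis
      using J \<beta> by (simp add: gr_to_rel_maps_def Max_mono_map_image[OF \<alpha> J])
  qed (auto simp: gr_to_rel_maps_def)
qed

lemma gr_to_rel_natural:
  "mono_map m n \<alpha> \<Longrightarrow> gr_to_rel m (hc_act m n \<alpha> z) = rel_act m n \<alpha> (gr_to_rel n z)"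
  by (simp add: gr_to_rel_def rel_act_def gr_proj_hc_act gr_to_rel_maps_hc_act)

end

section \<open>Simplices of the relative nerve\<close>

definition rel_vertex :: "(nat set \<Rightarrow> nat \<Rightarrow> (nat \<Rightarrow> nat) \<Rightarrow> ('o, 'm) hc_simplex) \<Rightarrow> nat \<Rightarrow> 'o" where
  "rel_vertex s i = fst (s {i} 0 (vertex_simplex i)) 0"

definition rel_interval :: "(nat set \<Rightarrow> nat \<Rightarrow> (nat \<Rightarrow> nat) \<Rightarrow> ('o, 'm) hc_simplex) \<Rightarrow> nat \<Rightarrow> nat
    \<Rightarrow> ('o, 'm) hc_simplex" where
  "rel_interval s i j = s {i..j} (j - i) (interval_simplex i j)"

text \<open>sigma_ij on a chain S of P_ij is read off from the top simplex of s^[i..j], after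
  shifting [i..j] down to [0..j-i].\<close>

definition rel_to_gr :: "nat \<Rightarrow> ('c, 'd, ('o, 'm) hc_simplex) rel_simplex \<Rightarrow> ('o \<times> 'c, 'm \<times> 'd) hc_simplex" where
  "rel_to_gr n = (\<lambda>(d, dm, s).
     ((\<lambda>i. if i \<le> n then (rel_vertex s i, d i) else undefined),
      (\<lambda>i j k S. if i \<le> j \<and> j \<le> n \<and> valid_chain i j k S
         then (snd (rel_interval s i j) 0 (j - i) k (\<lambda>l. (\<lambda>t. t - i) ` S l), dm i j)
         else undefined)))"

lemma rel_to_gr_fst: "i \<le> n \<Longrightarrow> fst (rel_to_gr n (d, dm, s)) i = (rel_vertex s i, d i)"
  by (simp add: rel_to_gr_def)

lemma rel_to_gr_fst_undef: "\<not> i \<le> n \<Longrightarrow> fst (rel_to_gr n (d, dm, s)) i = undefined"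
  by (simp add: rel_to_gr_def)

lemma rel_to_gr_snd:
  "i \<le> j \<Longrightarrow> j \<le> n \<Longrightarrow> valid_chain i j k S \<Longrightarrow> snd (rel_to_gr n (d, dm, s)) i j k S =
     (snd (rel_interval s i j) 0 (j - i) k (\<lambda>l. (\<lambda>t. t - i) ` S l), dm i j)"
  by (simp add: rel_to_gr_def)

lemma rel_to_gr_snd_undef:
  "\<not> (i \<le> j \<and> j \<le> n \<and> valid_chain i j k S) \<Longrightarrow> snd (rel_to_gr n (d, dm, s)) i j k S = undefined"
  by (auto simp: rel_to_gr_def)

context scat_diagram
begin

context
  fixes d dm s n assumes r: "(d, dm, s) \<in> rel_simp D fo fm n"
begin

lemma rel_chain_functor: "chain_functor D n d dm"
  using rel_simp_ord[OF r] unfolding ord_simp_iff by simp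

lemma rel_ob_undef: "\<not> i \<le> n \<Longrightarrow> d i = undefined"
  using rel_simp_ord[OF r] unfolding ord_simp_iff by simp

lemma rel_mor_undef:
  assumes "\<not> (i \<le> j \<and> j \<le> n)"
  shows "dm i j = undefined"
proof -
  have "\<forall>i j. \<not> (i \<le> j \<and> j \<le> n) \<longrightarrow> dm i j = undefined"
    using rel_simp_ord[OF r] unfolding ord_simp_iff by simp
  then show ?thesis using assms by blast
qed

lemmas rel_ob = chain_functor_ob[OF rel_chain_functor]
lemmas rel_mor = chain_functor_hom[OF rel_chain_functor]
lemmas rel_mor_id = chain_functor_id[OF rel_chain_functor]
lemmas rel_mor_comp = chain_functor_comp[OF rel_chain_functor]
lemmas rel_transport_ob_in = transport_ob_in[OF rel_chain_functor]
lemmas rel_transport_ob_comp = transport_ob_comp[OF rel_chain_functor]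
lemmas rel_transport_ob_id = transport_ob_id[OF rel_chain_functor]
lemmas rel_transport_hom_id = transport_hom_id[OF rel_chain_functor]

lemma rel_maps_in: "J \<noteq> {} \<Longrightarrow> J \<subseteq> {0..n} \<Longrightarrow> \<beta> \<in> delta_simp J m \<Longrightarrow> s J m \<beta> \<in> hc_simp (Fo (d (Max J))) m"
  using sset_map_in[OF rel_simp_sset_map[OF r]] by simp

lemma rel_maps_natural:
  "J \<noteq> {} \<Longrightarrow> J \<subseteq> {0..n} \<Longrightarrow> mono_map m' m \<alpha> \<Longrightarrow> \<beta> \<in> delta_simp J m \<Longrightarrow>
     s J m' (\<lambda>p. if p \<le> m' then \<beta> (\<alpha> p) else 0) = hc_act m' m \<alpha> (s J m \<beta>)"
  using sset_map_natural[OF rel_simp_sset_map[OF r]] by simp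

lemma rel_maps_undef: "J \<noteq> {} \<Longrightarrow> J \<subseteq> {0..n} \<Longrightarrow> \<beta> \<notin> delta_simp J m \<Longrightarrow> s J m \<beta> = undefined"
  using sset_map_undef[OF rel_simp_sset_map[OF r]] by simp

lemmas rel_maps_undef_index = rel_simp_undef[OF r]
lemmas rel_maps_compat = rel_simp_compat[OF r]

lemma rel_maps_same_max:
  assumes I: "I \<noteq> {}" "I \<subseteq> J" and J: "J \<subseteq> {0..n}" and M: "Max I = Max J" and \<beta>: "\<beta> \<in> delta_simp I m"
  shows "s I m \<beta> = s J m \<beta>"
proof -
  have I0: "I \<subseteq> {0..n}" using I J by auto
  have t: "Max I \<le> n" using Max_bounded_in[OF I(1) I0] by simp
  have "s J m \<beta> = fm (dm (Max I) (Max I)) m (s I m \<beta>)"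
    using rel_maps_compat[OF I J \<beta>] M by simp
  also have "\<dots> = s I m \<beta>"
    unfolding rel_mor_id[OF t] by (rule hc_nerve_map_id[OF rel_ob[OF t] rel_maps_in[OF I(1) I0 \<beta>]])
  finally show ?thesis by simp
qed

lemma rel_vertex_in: "i \<le> n \<Longrightarrow> rel_vertex s i \<in> sobj (Fo (d i))"
  using hc_simp_ob[OF rel_maps_in[of "{i}", OF _ _ vertex_simplex_in]] by (simp add: rel_vertex_def)

lemma rel_maps_ob:
  assumes J: "J \<noteq> {}" "J \<subseteq> {0..n}" and \<beta>: "\<beta> \<in> delta_simp J m" and p: "p \<le> m"
  shows "fst (s J m \<beta>) p = Fob (dm (\<beta> p) (Max J)) (rel_vertex s (\<beta> p))"
proof -
  have I: "{\<beta> p} \<noteq> {}" "{\<beta> p} \<subseteq> J" using delta_simp_mem[OF \<beta> p] by auto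
  have e: "(\<lambda>q. if q \<le> 0 then \<beta> p else 0) = vertex_simplex (\<beta> p)"
    by (simp add: vertex_simplex_def fun_eq_iff)
  have "fst (s J m \<beta>) p = fst (hc_act 0 m (\<lambda>_. p) (s J m \<beta>)) 0" by (simp add: hc_act_fst)
  also have "\<dots> = fst (s J 0 (vertex_simplex (\<beta> p))) 0"
    using rel_maps_natural[OF J mono_map_const[OF p, of 0] \<beta>] unfolding e by simp
  also have "\<dots> = fst (fm (dm (\<beta> p) (Max J)) 0 (s {\<beta> p} 0 (vertex_simplex (\<beta> p)))) 0"
    using rel_maps_compat[OF I J(2) vertex_simplex_in] by simp
  also have "\<dots> = Fob (dm (\<beta> p) (Max J)) (rel_vertex s (\<beta> p))"
    by (simp add: hc_nerve_map_fst rel_vertex_def)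
  finally show ?thesis .
qed

lemma rel_interval_in: "i \<le> j \<Longrightarrow> j \<le> n \<Longrightarrow> rel_interval s i j \<in> hc_simp (Fo (d j)) (j - i)"
  using rel_maps_in[of "{i..j}", OF _ _ interval_simplex_in] Max_atLeastAtMost_nat
  by (simp add: rel_interval_def)

lemma rel_interval_ob:
  "i \<le> p \<Longrightarrow> p \<le> j \<Longrightarrow> j \<le> n \<Longrightarrow> fst (rel_interval s i j) (p - i) = Fob (dm p j) (rel_vertex s p)"
  using rel_maps_ob[of "{i..j}", OF _ _ interval_simplex_in, of "p - i"] Max_atLeastAtMost_nat
  by (simp add: rel_interval_def interval_simplex_apply)

lemma rel_interval_first: "i \<le> j \<Longrightarrow> j \<le> n \<Longrightarrow> fst (rel_interval s i j) 0 = Fob (dm i j) (rel_vertex s i)"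
  using rel_interval_ob[of i i j] by simp

lemma rel_interval_last: "i \<le> j \<Longrightarrow> j \<le> n \<Longrightarrow> fst (rel_interval s i j) (j - i) = rel_vertex s j"
  using rel_interval_ob[of i j j] rel_transport_ob_id rel_vertex_in by simp

lemma rel_interval_hom_in:
  assumes "i \<le> j" "j \<le> n" "valid_chain i j k S"
  shows "snd (rel_interval s i j) 0 (j - i) k (\<lambda>l. (\<lambda>t. t - i) ` S l)
    \<in> ssimp (shom (Fo (d j)) (Fob (dm i j) (rel_vertex s i)) (rel_vertex s j)) k"
proof -
  have "valid_chain 0 (j - i) k (\<lambda>l. (\<lambda>t. t - i) ` S l)"
    using valid_chain_shift[OF assms(3), of i] by simp
  then show ?thesis
    using hc_simp_hom[OF rel_interval_in[OF assms(1,2)] le0 order_refl]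
      rel_interval_first[OF assms(1,2)] rel_interval_last[OF assms(1,2)] by simp
qed

text \<open>A simplex beta of Delta^J running from a to b factors through the top simplex of
  Delta^[a..b]; compatibility along beta([m]) <= J and along beta([m]) <= [a..b] (which
  have the same maximum) then expresses s^J(beta) through s^[a..b].\<close>

lemma rel_maps_through_interval:
  assumes J: "J \<noteq> {}" "J \<subseteq> {0..n}" and \<beta>: "\<beta> \<in> delta_simp J m"
  shows "s J m \<beta> = fm (dm (\<beta> m) (Max J)) m
    (hc_act m (\<beta> m - \<beta> 0) (\<lambda>r. if r \<le> m then \<beta> r - \<beta> 0 else 0) (rel_interval s (\<beta> 0) (\<beta> m)))"
proof -
  define a b I where "a = \<beta> 0" and "b = \<beta> m" and "I = \<beta> ` {0..m}"
  define \<gamma> where "\<gamma> = (\<lambda>r. if r \<le> m then \<beta> r - a else 0)"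
  have ab: "a \<le> b" "b \<le> n"
    using delta_simp_mono[OF \<beta>, of 0 m] delta_simp_mem[OF \<beta>, of m] J(2) unfolding a_def b_def by auto
  have I: "I \<noteq> {}" "I \<subseteq> J" "I \<subseteq> {a..b}"
    using delta_simp_mem[OF \<beta>] delta_simp_mono[OF \<beta>] unfolding I_def a_def b_def by auto
  have MI: "Max I = b" unfolding I_def b_def by (rule Max_eqI) (auto intro: delta_simp_mono[OF \<beta>])
  have \<beta>I: "\<beta> \<in> delta_simp I m" using \<beta> unfolding delta_simp_def I_def by auto
  have "\<beta> r \<in> {a..b}" if "r \<le> m" for r using I(3) that unfolding I_def by (simp add: image_subset_iff)
  then have \<gamma>: "mono_map m (b - a) \<gamma>"
    unfolding mono_map_def \<gamma>_def by (auto intro!: diff_le_mono delta_simp_mono[OF \<beta>])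
  have \<beta>\<gamma>: "\<beta> = (\<lambda>r. if r \<le> m then interval_simplex a b (\<gamma> r) else 0)"
    using I(3) \<beta> unfolding interval_simplex_def \<gamma>_def I_def delta_simp_def by (fastforce simp: fun_eq_iff)
  have "s J m \<beta> = fm (dm b (Max J)) m (s I m \<beta>)"
    using rel_maps_compat[OF I(1,2) J(2) \<beta>I] MI by simp
  also have "s I m \<beta> = s {a..b} m \<beta>"
    using rel_maps_same_max[OF I(1,3) _ _ \<beta>I] ab MI Max_atLeastAtMost_nat by simp
  also have "\<dots> = hc_act m (b - a) \<gamma> (rel_interval s a b)"
    unfolding rel_interval_def using ab
    by (subst \<beta>\<gamma>) (rule rel_maps_natural[OF _ _ \<gamma> interval_simplex_in]; auto)
  finally show ?thesis unfolding a_def b_def \<gamma>_def .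
qed

lemma rel_maps_hom:
  assumes J: "J \<noteq> {}" "J \<subseteq> {0..n}" and \<beta>: "\<beta> \<in> delta_simp J m"
    and pq: "p \<le> q" "q \<le> m" and T: "valid_chain p q k T"
  shows "snd (s J m \<beta>) p q k T = Fhom (dm (\<beta> q) (Max J)) k
    (Fob (dm (\<beta> p) (\<beta> q)) (rel_vertex s (\<beta> p))) (rel_vertex s (\<beta> q))
    (snd (rel_interval s (\<beta> p) (\<beta> q)) 0 (\<beta> q - \<beta> p) k (\<lambda>l. (\<lambda>x. x - \<beta> p) ` \<beta> ` T l))"
proof -
  define \<beta>' where "\<beta>' = (\<lambda>r. if r \<le> q - p then \<beta> (p + r) else 0)"
  define \<gamma> where "\<gamma> = (\<lambda>r. if r \<le> q - p then \<beta>' r - \<beta> p else 0)"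
  define T' where "T' = (\<lambda>l. (\<lambda>x. x - p) ` T l)"
  let ?W = "rel_interval s (\<beta> p) (\<beta> q)"
  have ab: "\<beta> p \<le> \<beta> q" "\<beta> q \<le> n"
    using delta_simp_mono[OF \<beta> pq] delta_simp_mem[OF \<beta> pq(2)] J(2) by auto
  have \<beta>'_ends: "\<beta>' 0 = \<beta> p" "\<beta>' (q - p) = \<beta> q" using pq unfolding \<beta>'_def by auto
  have T': "valid_chain 0 (q - p) k T'" using valid_chain_shift[OF T, of p] unfolding T'_def by simp
  have shift: "mono_map (q - p) m ((+) p)" using pq unfolding mono_map_def by auto
  have \<beta>': "\<beta>' \<in> delta_simp J (q - p)" using delta_simp_act[OF \<beta> shift] unfolding \<beta>'_def by simp
  have "(\<lambda>l. (+) p ` T' l) = T"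
    using valid_chain_image_cong[OF T, of "\<lambda>x. p + (x - p)" id] unfolding T'_def image_image by simp
  then have "snd (s J m \<beta>) p q k T = snd (hc_act (q - p) m ((+) p) (s J m \<beta>)) 0 (q - p) k T'"
    using pq by (simp add: hc_act_snd[OF le0 order_refl T'])
  also have "hc_act (q - p) m ((+) p) (s J m \<beta>) = s J (q - p) \<beta>'"
    unfolding \<beta>'_def by (rule rel_maps_natural[OF J shift \<beta>, symmetric])
  also have "\<dots> = fm (dm (\<beta> q) (Max J)) (q - p) (hc_act (q - p) (\<beta> q - \<beta> p) \<gamma> ?W)"
    using rel_maps_through_interval[OF J \<beta>'] unfolding \<beta>'_ends \<gamma>_def .
  also have "(\<lambda>l. \<gamma> ` T' l) = (\<lambda>l. (\<lambda>x. x - \<beta> p) ` \<beta> ` T l)"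
    using valid_chain_image_cong[OF T, of "\<lambda>x. \<gamma> (x - p)" "\<lambda>x. \<beta> x - \<beta> p"]
    unfolding T'_def \<gamma>_def \<beta>'_def image_image by (simp add: diff_le_mono)
  then have "snd (fm (dm (\<beta> q) (Max J)) (q - p) (hc_act (q - p) (\<beta> q - \<beta> p) \<gamma> ?W)) 0 (q - p) k T' =
      Fhom (dm (\<beta> q) (Max J)) k (fst ?W 0) (fst ?W (\<beta> q - \<beta> p))
        (snd ?W 0 (\<beta> q - \<beta> p) k (\<lambda>l. (\<lambda>x. x - \<beta> p) ` \<beta> ` T l))"
    using \<beta>'_ends
    by (simp add: hc_nerve_map_snd[OF le0 order_refl T'] hc_act_fst hc_act_snd[OF le0 order_refl T'] \<gamma>_def)
  finally show ?thesis using rel_interval_first[OF ab] rel_interval_last[OF ab] by simp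
qed

lemma rel_interval_hom_shift:
  assumes ipql: "i \<le> p" "q \<le> l" "l \<le> n" and S: "valid_chain p q k S"
  shows "snd (rel_interval s i l) (p - i) (q - i) k (\<lambda>l'. (\<lambda>t. t - i) ` S l') =
    Fhom (dm q l) k (Fob (dm p q) (rel_vertex s p)) (rel_vertex s q)
      (snd (rel_interval s p q) 0 (q - p) k (\<lambda>l'. (\<lambda>t. t - p) ` S l'))"
proof -
  have pq: "p \<le> q" by (rule valid_chain_le[OF S])
  have ends: "interval_simplex i l (p - i) = p" "interval_simplex i l (q - i) = q"
    using ipql pq by (simp_all add: interval_simplex_apply)
  show ?thesis
    using rel_maps_hom[of "{i..l}", OF _ _ interval_simplex_in _ _ valid_chain_shift[OF S, of i]] ipql pq
    by (simp add: rel_interval_def[of s i l, symmetric] Max_atLeastAtMost_nat ends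
        interval_simplex_shift[OF S ipql(1,2)])
qed

lemma rel_to_gr_ob_in: "i \<le> n \<Longrightarrow> fst (rel_to_gr n (d, dm, s)) i \<in> sobj G"
  by (simp add: rel_to_gr_fst gr_scat_sobj_iff rel_ob rel_vertex_in)

lemma rel_to_gr_hom_in:
  "i \<le> j \<Longrightarrow> j \<le> n \<Longrightarrow> valid_chain i j k S \<Longrightarrow>
     snd (rel_to_gr n (d, dm, s)) i j k S
       \<in> ssimp (shom G (fst (rel_to_gr n (d, dm, s)) i) (fst (rel_to_gr n (d, dm, s)) j)) k"
  by (simp add: rel_to_gr_fst rel_to_gr_snd gr_scat_ssimp_iff rel_mor rel_interval_hom_in)

lemma rel_to_gr_sact:
  assumes ij: "i \<le> j" "j \<le> n" and S: "valid_chain i j k S" and \<beta>: "mono_map k' k \<beta>"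
  shows "sact (shom G (fst (rel_to_gr n (d, dm, s)) i) (fst (rel_to_gr n (d, dm, s)) j)) k' k \<beta>
      (snd (rel_to_gr n (d, dm, s)) i j k S)
    = snd (rel_to_gr n (d, dm, s)) i j k' (\<lambda>l. if l \<le> k' then S (\<beta> l) else {})"
proof -
  have S': "valid_chain 0 (j - i) k (\<lambda>l. (\<lambda>t. t - i) ` S l)"
    using valid_chain_shift[OF S, of i] by simp
  have "(\<lambda>l. (\<lambda>t. t - i) ` (if l \<le> k' then S (\<beta> l) else {})) =
      (\<lambda>l. if l \<le> k' then (\<lambda>l. (\<lambda>t. t - i) ` S l) (\<beta> l) else {})"
    by (simp add: fun_eq_iff)
  then show ?thesis
    using hc_simp_sact[OF rel_interval_in[OF ij] le0 order_refl S' \<beta>]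
      rel_interval_first[OF ij] rel_interval_last[OF ij] ij
    by (simp add: rel_to_gr_fst[OF order_trans[OF ij]] rel_to_gr_fst[OF ij(2)] rel_to_gr_snd[OF ij S]
        rel_to_gr_snd[OF ij valid_chain_reindex[OF S \<beta>]] gr_scat_sact)
qed

text \<open>Composition in Gr F of sigma_ij and sigma_jl is the composition in the
  simplicial category F(d_l) of two faces of the top simplex of s^[i..l].\<close>

lemma rel_to_gr_comp:
  assumes ijl: "i \<le> j" "j \<le> l" "l \<le> n" and S: "valid_chain i j k S" and T: "valid_chain j l k T"
  shows "scomp G (fst (rel_to_gr n (d, dm, s)) i) (fst (rel_to_gr n (d, dm, s)) j)
      (fst (rel_to_gr n (d, dm, s)) l) k (snd (rel_to_gr n (d, dm, s)) i j k S)
      (snd (rel_to_gr n (d, dm, s)) j l k T)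
    = snd (rel_to_gr n (d, dm, s)) i l k (\<lambda>p. S p \<union> T p)"
proof -
  let ?v = "rel_vertex s" and ?W = "rel_interval s i l"
  let ?Si = "\<lambda>p. (\<lambda>t. t - i) ` S p" and ?Ti = "\<lambda>p. (\<lambda>t. t - i) ` T p"
  let ?Tj = "\<lambda>p. (\<lambda>t. t - j) ` T p"
  have n: "i \<le> l" "i \<le> n" "j \<le> n" using ijl by auto
  have S': "valid_chain 0 (j - i) k ?Si" using valid_chain_shift[OF S, of i] by simp
  have T': "valid_chain (j - i) (l - i) k ?Ti" by (rule valid_chain_shift[OF T])
  have \<tau>: "snd (rel_interval s j l) 0 (l - j) k ?Tj
      \<in> ssimp (shom (Fo (d l)) (Fob (dm j l) (?v j)) (?v l)) k"
    by (rule rel_interval_hom_in[OF ijl(2,3) T])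
  have faces:
    "snd ?W 0 (j - i) k ?Si = Fhom (dm j l) k (Fob (dm i j) (?v i)) (?v j) (snd (rel_interval s i j) 0 (j - i) k ?Si)"
    "snd ?W (j - i) (l - i) k ?Ti = snd (rel_interval s j l) 0 (l - j) k ?Tj"
    using rel_interval_hom_shift[OF order_refl ijl(2,3) S] rel_interval_hom_shift[OF ijl(1) order_refl ijl(3) T]
      rel_transport_hom_id[OF ijl(3) rel_transport_ob_in[OF ijl(2,3) rel_vertex_in[OF n(3)]]
        rel_vertex_in[OF ijl(3)] \<tau>]
    by simp_all
  have obs: "fst ?W 0 = Fob (dm j l) (Fob (dm i j) (?v i))" "fst ?W (j - i) = Fob (dm j l) (?v j)"
    "fst ?W (l - i) = ?v l"
    using rel_interval_first[OF n(1) ijl(3)] rel_transport_ob_comp[OF ijl rel_vertex_in[OF n(2)]]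
      rel_interval_ob[OF ijl] rel_interval_last[OF n(1) ijl(3)] by simp_all
  have "scomp (Fo (d l)) (fst ?W 0) (fst ?W (j - i)) (fst ?W (l - i)) k
      (snd ?W 0 (j - i) k ?Si) (snd ?W (j - i) (l - i) k ?Ti) = snd ?W 0 (l - i) k (\<lambda>p. ?Si p \<union> ?Ti p)"
    using ijl by (intro hc_simp_comp[OF rel_interval_in[OF n(1) ijl(3)] _ _ _ S' T']) auto
  then show ?thesis
    using ijl n faces obs rel_mor_comp[OF ijl]
    by (simp add: rel_to_gr_fst[OF n(2)] rel_to_gr_fst[OF n(3)] rel_to_gr_fst[OF ijl(3)]
        rel_to_gr_snd[OF ijl(1) n(3) S] rel_to_gr_snd[OF ijl(2,3) T]
        rel_to_gr_snd[OF n(1) ijl(3) valid_chain_union[OF S T]] gr_scat_scomp image_Un)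
qed

lemma rel_to_gr_id:
  assumes i: "i \<le> n"
  shows "snd (rel_to_gr n (d, dm, s)) i i k (\<lambda>p. if p \<le> k then {i} else {}) =
    degen0 (shom G (fst (rel_to_gr n (d, dm, s)) i) (fst (rel_to_gr n (d, dm, s)) i)) k
      (sid G (fst (rel_to_gr n (d, dm, s)) i))"
proof -
  have "(\<lambda>l. (\<lambda>t. t - i) ` (if l \<le> k then {i} else {})) = (\<lambda>p. if p \<le> k then {0} else {})"
    by (simp add: fun_eq_iff)
  then show ?thesis
    using hc_simp_id[OF rel_interval_in[OF order_refl i] le0, of k] rel_interval_last[OF order_refl i]
      rel_mor_id[OF i] Fob_id[OF rel_ob[OF i] rel_vertex_in[OF i]]
    by (simp add: rel_to_gr_fst[OF i] rel_to_gr_snd[OF order_refl i valid_chain_const] gr_scat_degen0 gr_scat_sid)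
qed

lemma rel_to_gr_in_hc_simp: "rel_to_gr n (d, dm, s) \<in> hc_simp G n"
  by (rule hc_simpI)
    (simp_all add: rel_to_gr_fst_undef rel_to_gr_snd_undef rel_to_gr_ob_in rel_to_gr_hom_in
      rel_to_gr_sact rel_to_gr_comp rel_to_gr_id)

end

end

context scat_diagram
begin

context
  fixes n z assumes z: "z \<in> hc_simp G n"
begin

lemma gr_to_rel_vertex: "i \<le> n \<Longrightarrow> rel_vertex (gr_to_rel_maps n z) i = fst (fst z i)"
  using gr_transport_ob_id[OF z _ gr_simplex_fibre_ob[OF z]] vertex_simplex_in
  by (simp add: rel_vertex_def gr_to_rel_maps_def gr_push_fst) (simp add: vertex_simplex_def)

lemma gr_to_rel_interval:
  "i \<le> j \<Longrightarrow> j \<le> n \<Longrightarrow> rel_interval (gr_to_rel_maps n z) i j = gr_push n z j (j - i) (interval_simplex i j)"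
  using interval_simplex_in[of i j] by (simp add: rel_interval_def gr_to_rel_maps_def Max_atLeastAtMost_nat)

lemma rel_to_gr_gr_to_rel: "rel_to_gr n (gr_to_rel n z) = z"
proof (rule prod_eqI; intro ext)
  fix i
  show "fst (rel_to_gr n (gr_to_rel n z)) i = fst z i"
    using gr_to_rel_vertex[of i] hc_simp_ob_undef[OF z, of i]
    by (cases "i \<le> n") (simp_all add: gr_to_rel_def rel_to_gr_fst rel_to_gr_fst_undef gr_proj_eq)
next
  fix i j k S
  show "snd (rel_to_gr n (gr_to_rel n z)) i j k S = snd z i j k S"
  proof (cases "i \<le> j \<and> j \<le> n \<and> valid_chain i j k S")
    case True
    then have ij: "i \<le> j" "j \<le> n" and S: "valid_chain i j k S" by auto
    have S': "valid_chain 0 (j - i) k (\<lambda>l. (\<lambda>t. t - i) ` S l)"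
      using valid_chain_shift[OF S, of i] by simp
    have "snd (rel_interval (gr_to_rel_maps n z) i j) 0 (j - i) k (\<lambda>l. (\<lambda>t. t - i) ` S l) = fst (snd z i j k S)"
      using ij gr_transport_hom_id[OF z ij(2) gr_transport_ob_in[OF z ij gr_simplex_fibre_ob[OF z]]
          gr_simplex_fibre_ob[OF z ij(2)] gr_simplex_fibre_hom[OF z ij S]]
      by (simp add: gr_to_rel_interval gr_push_snd[OF le0 order_refl S'] interval_simplex_apply
          interval_simplex_shift[OF S order_refl order_refl])
    then show ?thesis
      using ij S gr_simplex_mor_const[OF z ij S]
      by (simp add: gr_to_rel_def rel_to_gr_snd gr_proj_eq prod_eq_iff)
  qed (simp add: gr_to_rel_def rel_to_gr_snd_undef hc_simp_hom_undef[OF z])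
qed

end

context
  fixes d dm s n assumes r: "(d, dm, s) \<in> rel_simp D fo fm n"
begin

lemma gr_mor_rel_to_gr: "gr_mor n (rel_to_gr n (d, dm, s)) = dm"
proof (intro ext)
  fix i j
  show "gr_mor n (rel_to_gr n (d, dm, s)) i j = dm i j"
  proof (cases "i \<le> j \<and> j \<le> n")
    case True
    then show ?thesis by (simp add: gr_mor_def rel_to_gr_snd valid_chain_vertex_iff)
  next
    case False
    then show ?thesis by (simp only: gr_mor_undef[OF False] rel_mor_undef[OF r False])
  qed
qed

lemma gr_push_rel_to_gr:
  assumes J: "J \<noteq> {}" "J \<subseteq> {0..n}" and \<beta>: "\<beta> \<in> delta_simp J m"
  shows "gr_push n (rel_to_gr n (d, dm, s)) (Max J) m \<beta> = s J m \<beta>"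
proof -
  have \<beta>n: "\<beta> p \<le> n" if "p \<le> m" for p using delta_simp_mem[OF \<beta> that] J(2) by auto
  show ?thesis
  proof (rule prod_eqI; intro ext)
    fix p
    show "fst (gr_push n (rel_to_gr n (d, dm, s)) (Max J) m \<beta>) p = fst (s J m \<beta>) p"
      using rel_maps_ob[OF r J \<beta>, of p] hc_simp_ob_undef[OF rel_maps_in[OF r J \<beta>], of p] \<beta>n[of p]
      by (cases "p \<le> m") (simp_all add: gr_push_fst gr_push_fst_undef gr_mor_rel_to_gr rel_to_gr_fst)
  next
    fix p q k T
    show "snd (gr_push n (rel_to_gr n (d, dm, s)) (Max J) m \<beta>) p q k T = snd (s J m \<beta>) p q k T"
    proof (cases "p \<le> q \<and> q \<le> m \<and> valid_chain p q k T")
      case True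
      then have pq: "p \<le> q" "q \<le> m" and T: "valid_chain p q k T" by auto
      have "valid_chain (\<beta> p) (\<beta> q) k (\<lambda>l. \<beta> ` T l)"
        by (rule valid_chain_image[OF T delta_simp_mono[OF \<beta>]]) (use pq in auto)
      then show ?thesis
        using rel_maps_hom[OF r J \<beta> pq T] delta_simp_mono[OF \<beta> pq] \<beta>n[OF order_trans[OF pq]] \<beta>n[OF pq(2)]
        by (simp add: gr_push_snd[OF pq T] gr_mor_rel_to_gr rel_to_gr_fst rel_to_gr_snd)
    qed (simp add: gr_push_snd_undef hc_simp_hom_undef[OF rel_maps_in[OF r J \<beta>]])
  qed
qed

lemma gr_to_rel_maps_rel_to_gr: "gr_to_rel_maps n (rel_to_gr n (d, dm, s)) J m \<beta> = s J m \<beta>"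
proof (cases "J \<noteq> {} \<and> J \<subseteq> {0..n}")
  case True
  then show ?thesis
    using rel_maps_undef[OF r, of J \<beta> m]
    by (cases "\<beta> \<in> delta_simp J m") (simp_all add: gr_to_rel_maps_def gr_push_rel_to_gr)
next
  case False
  then have undef: "\<not> (J \<noteq> {} \<and> J \<subseteq> {0..n} \<and> \<beta> \<in> delta_simp J m)" by blast
  show ?thesis unfolding gr_to_rel_maps_def if_not_P[OF undef] rel_maps_undef_index[OF r False] ..
qed

lemma gr_to_rel_rel_to_gr: "gr_to_rel n (rel_to_gr n (d, dm, s)) = (d, dm, s)"
proof -
  have "fst (gr_proj n (rel_to_gr n (d, dm, s))) = d"
    using rel_ob_undef[OF r] by (auto simp: gr_proj_eq rel_to_gr_fst fun_eq_iff)
  then show ?thesis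
    by (simp add: gr_to_rel_def gr_proj_eq gr_mor_rel_to_gr gr_to_rel_maps_rel_to_gr fun_eq_iff)
qed

end

end

theorem theorem3p10:
  fixes D :: "('c, 'd) cat"
    and Fo :: "'c \<Rightarrow> ('o, 'm) scat"
    and Fob :: "'d \<Rightarrow> 'o \<Rightarrow> 'o"
    and Fhom :: "'d \<Rightarrow> nat \<Rightarrow> 'o \<Rightarrow> 'o \<Rightarrow> 'm \<Rightarrow> 'm"
  assumes "category D"
    and "scat_functor D Fo Fob Fhom"
  shows "\<exists>\<Phi>.
     (\<forall>n. bij_betw (\<Phi> n) (hc_simp (gr_scat D Fo Fob Fhom) n)
            (rel_simp D (\<lambda>c. hc_nerve (Fo c)) (\<lambda>\<phi>. hc_nerve_map (Fob \<phi>) (Fhom \<phi>)) n)) \<and>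
     (\<forall>m n \<alpha> x. mono_map m n \<alpha> \<longrightarrow> x \<in> hc_simp (gr_scat D Fo Fob Fhom) n \<longrightarrow>
        \<Phi> m (hc_act m n \<alpha> x) = rel_act m n \<alpha> (\<Phi> n x)) \<and>
     (\<forall>n x. x \<in> hc_simp (gr_scat D Fo Fob Fhom) n \<longrightarrow> rel_proj (\<Phi> n x) = gr_proj n x)"
proof -
  interpret scat_diagram D Fo Fob Fhom using assms(2) by (rule scat_diagram.intro)
  have "bij_betw (gr_to_rel n) (hc_simp G n) (rel_simp D fo fm n)" for n
  proof (rule bij_betw_byWitness[where f' = "rel_to_gr n"])
    show "\<forall>z\<in>hc_simp G n. rel_to_gr n (gr_to_rel n z) = z"
      using rel_to_gr_gr_to_rel by blast
    show "\<forall>r\<in>rel_simp D fo fm n. gr_to_rel n (rel_to_gr n r) = r"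
      using gr_to_rel_rel_to_gr by force
    show "gr_to_rel n ` hc_simp G n \<subseteq> rel_simp D fo fm n"
      using gr_to_rel_in_rel_simp by blast
    show "rel_to_gr n ` rel_simp D fo fm n \<subseteq> hc_simp G n"
      using rel_to_gr_in_hc_simp by force
  qed
  then show ?thesis
    using gr_to_rel_natural by (intro exI[of _ gr_to_rel]) (auto simp: gr_to_rel_def rel_proj_def)
qed

end
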